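(* Let $L\ge 2$ and let $S=(d,N_1,\dots,N_L)$ be a neural network architecture. Let $\Omega\subset\mathbb{R}^d$ have non-empty interior, and let $\varrho:\mathbb{R}\to\mathbb{R}$ be locally Lipschitz continuous. If the set $\mathcal{RNN}_\varrho^\Omega(S)$ is convex, then $\varrho$ is a polynomial.
   Context: A neural network with architecture $S=(N_0,N_1,\dots,N_L)$ (with $N_0=d$ the input dimension) is a family $\Phi=((A_\ell,b_\ell))_{\ell=1}^L$ with $A_\ell\in\mathbb{R}^{N_\ell\times N_{\ell-1}}$, $b_\ell\in\mathbb{R}^{N_\ell}$; $\mathcal{NN}(S)$ denotes the set of all such networks. For an activation function $\varrho:\mathbb{R}\to\mathbb{R}$ and $\Omega\subset\mathbb{R}^d$, the realization $\mathrm{R}_\varrho^\Omega(\Phi):\Omega\to\mathbb{R}^{N_L}$ is $x\mapsto x_L$, where $x_0=x$, $x_\ell=\varrho(A_\ell x_{\ell-1}+b_\ell)$ for $\ell=1,\dots,L-1$ ($\varrho$ acting componentwise), and $x_L=A_Lx_{L-1}+b_L$. Further $\mathcal{RNN}_\varrho^\Omega(S)=\{\mathrm{R}_\varrho^\Omega(\Phi):\Phi\in\mathcal{NN}(S)\}$. *)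

theory Defs
  imports "HOL-Analysis.Analysis" "HOL-Computational_Algebra.Polynomial"
begin

(* Architecture S = (d, N_1, ..., N_L): the input dimension d is CARD('d) (input space real^'d),
   the list Ns = [N_1, ..., N_L] gives the remaining layer widths, so L = length Ns.
   Vectors in R^{N_l} are represented as nat => real (entries with index >= N_l are forced to 0).
   A matrix A in R^{N_l x N_{l-1}} is a function nat => nat => real; only entries A i j with
   i < N_l, j < N_{l-1} are ever used.
   The first layer (A_1, b_1) is given by rows W1 j :: real^'d (j < N_1) and biases b1. *)

type_synonym layer = "(nat \<Rightarrow> nat \<Rightarrow> real) \<times> (nat \<Rightarrow> real)"

definition affine_step :: "nat \<Rightarrow> nat \<Rightarrow> layer \<Rightarrow> (nat \<Rightarrow> real) \<Rightarrow> (nat \<Rightarrow> real)" where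
  "affine_step n m Ab v = (\<lambda>i. if i < m then (\<Sum>j<n. fst Ab i j * v j) + snd Ab i else 0)"

fun layers_eval :: "(real \<Rightarrow> real) \<Rightarrow> nat \<Rightarrow> nat list \<Rightarrow> layer list \<Rightarrow> (nat \<Rightarrow> real) \<Rightarrow> (nat \<Rightarrow> real)" where
  "layers_eval \<rho> n [m] [Ab] v = affine_step n m Ab v"
| "layers_eval \<rho> n (m # ms) (Ab # ls) v =
     layers_eval \<rho> m ms ls (\<lambda>i. if i < m then \<rho> (affine_step n m Ab v i) else 0)"
| "layers_eval \<rho> n _ _ v = (\<lambda>_. 0)"

type_synonym 'd network = "(nat \<Rightarrow> real ^ 'd) \<times> (nat \<Rightarrow> real) \<times> layer list"

definition is_network :: "nat list \<Rightarrow> 'd::finite network \<Rightarrow> bool" where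
  "is_network Ns \<Phi> \<longleftrightarrow> length (snd (snd \<Phi>)) + 1 = length Ns"

(* realization R_rho^Omega(Phi) (requires L >= 2, so the first layer is hidden);
   as a function on Omega, set to 0 outside Omega *)
definition realization :: "(real \<Rightarrow> real) \<Rightarrow> (real ^ 'd) set \<Rightarrow> nat list \<Rightarrow> 'd::finite network
    \<Rightarrow> (real ^ 'd \<Rightarrow> nat \<Rightarrow> real)" where
  "realization \<rho> \<Omega> Ns \<Phi> = (\<lambda>x.
     if x \<in> \<Omega> then
       (let (W1, b1, ls) = \<Phi>; N1 = hd Ns;
            x1 = (\<lambda>j. if j < N1 then \<rho> (W1 j \<bullet> x + b1 j) else 0)
        in layers_eval \<rho> N1 (tl Ns) ls x1)
     else (\<lambda>_. 0))"

definition RNN :: "(real \<Rightarrow> real) \<Rightarrow> (real ^ 'd) set \<Rightarrow> nat list \<Rightarrow> (real ^ 'd::finite \<Rightarrow> nat \<Rightarrow> real) set" where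
  "RNN \<rho> \<Omega> Ns = {realization \<rho> \<Omega> Ns \<Phi> | \<Phi>. is_network Ns \<Phi>}"

definition fun_set_convex :: "('a \<Rightarrow> nat \<Rightarrow> real) set \<Rightarrow> bool" where
  "fun_set_convex F \<longleftrightarrow> (\<forall>f\<in>F. \<forall>g\<in>F. \<forall>t::real. 0 \<le> t \<and> t \<le> 1 \<longrightarrow>
      (\<lambda>x i. t * f x i + (1 - t) * g x i) \<in> F)"

definition locally_lipschitz :: "(real \<Rightarrow> real) \<Rightarrow> bool" where
  "locally_lipschitz \<rho> \<longleftrightarrow> (\<forall>x. \<exists>e>0. \<exists>K. lipschitz_on K (cball x e) \<rho>)"

definition is_polynomial_fun :: "(real \<Rightarrow> real) \<Rightarrow> bool" where
  "is_polynomial_fun \<rho> \<longleftrightarrow> (\<exists>p :: real poly. \<forall>x. \<rho> x = poly p x)"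

end

theory Submission
  imports Defs "HOL-Computational_Algebra.Fundamental_Theorem_Algebra"
begin

section \<open>Linear relations between equally spaced values\<close>

text \<open>\<open>shift_op f P h \<beta>\<close> is \<open>(P(\<tau>\<^sub>h) f)(\<beta>)\<close>, where \<open>\<tau>\<^sub>h\<close> is the translation
  \<open>(\<tau>\<^sub>h f)(x) = f(x + h)\<close>. Complex coefficients are needed to factor \<open>P\<close> into linear factors.\<close>

definition shift_op :: "(real \<Rightarrow> real) \<Rightarrow> complex poly \<Rightarrow> real \<Rightarrow> real \<Rightarrow> complex" where
  "shift_op f P h \<beta> = (\<Sum>k\<le>degree P. coeff P k * of_real (f (\<beta> + real k * h)))"

definition annihilators :: "(real \<Rightarrow> real) \<Rightarrow> complex poly set" where
  "annihilators f = {P. \<forall>h \<beta>. shift_op f P h \<beta> = 0}"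

lemma shift_op_eq_sum:
  assumes "degree P \<le> N"
  shows "shift_op f P h \<beta> = (\<Sum>k\<le>N. coeff P k * of_real (f (\<beta> + real k * h)))"
  unfolding shift_op_def
  by (rule sum.mono_neutral_left) (use assms in \<open>auto simp: coeff_eq_0\<close>)

lemma shift_op_0 [simp]: "shift_op f 0 h \<beta> = 0"
  by (simp add: shift_op_def)

lemma shift_op_add: "shift_op f (P + Q) h \<beta> = shift_op f P h \<beta> + shift_op f Q h \<beta>"
proof -
  let ?N = "max (degree P) (degree Q)"
  have "degree (P + Q) \<le> ?N"
    by (rule degree_add_le) auto
  then show ?thesis
    by (simp add: shift_op_eq_sum[of _ ?N] sum.distrib distrib_right)
qed

lemma shift_op_smult: "shift_op f (smult c P) h \<beta> = c * shift_op f P h \<beta>"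
  by (simp add: shift_op_eq_sum[of "smult c P" "degree P"] shift_op_def sum_distrib_left mult.assoc)

lemma shift_op_diff: "shift_op f (P - Q) h \<beta> = shift_op f P h \<beta> - shift_op f Q h \<beta>"
  using shift_op_add[of f P "-Q"] shift_op_smult[of f "-1" Q] by simp

lemma shift_op_pCons:
  "shift_op f (pCons a P) h \<beta> = a * of_real (f \<beta>) + shift_op f P h (\<beta> + h)"
proof -
  have "shift_op f (pCons a P) h \<beta>
      = (\<Sum>k\<le>Suc (degree P). coeff (pCons a P) k * of_real (f (\<beta> + real k * h)))"
    by (rule shift_op_eq_sum) (simp add: degree_pCons_le)
  also have "\<dots> = a * of_real (f \<beta>) + shift_op f P h (\<beta> + h)"
    by (subst sum.atMost_Suc_shift) (simp add: shift_op_def algebra_simps)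
  finally show ?thesis .
qed

lemma shift_op_monom_mult: "shift_op f (monom 1 q * P) h \<beta> = shift_op f P h (\<beta> + real q * h)"
proof (induction q arbitrary: \<beta>)
  case (Suc q)
  have "monom 1 (Suc q) * P = pCons 0 (monom 1 q * P)"
    by (simp add: monom_Suc)
  then show ?case
    using Suc by (simp add: shift_op_pCons algebra_simps)
qed simp

lemma shift_op_pcompose_monom:
  "shift_op f (pcompose P (monom 1 q)) h \<beta> = shift_op f P (real q * h) \<beta>"
proof (induction P arbitrary: \<beta>)
  case (pCons a P)
  have "pcompose (pCons a P) (monom 1 q) = [:a:] + monom 1 q * pcompose P (monom 1 q)"
    by (simp add: pcompose_pCons)
  then show ?case
    by (simp add: shift_op_add shift_op_monom_mult pCons.IH shift_op_pCons)
qed simp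

lemma annihilators_mult: "P \<in> annihilators f \<Longrightarrow> Q * P \<in> annihilators f"
proof (induction Q)
  case (pCons a Q)
  have "pCons a Q * P = smult a P + pCons 0 (Q * P)"
    by simp
  moreover have "shift_op f (smult a P + pCons 0 (Q * P)) h \<beta> = 0" for h \<beta>
    using pCons by (simp add: annihilators_def shift_op_add shift_op_smult shift_op_pCons)
  ultimately show ?case
    by (simp add: annihilators_def)
qed (simp add: annihilators_def)

lemma annihilators_diff:
  "P \<in> annihilators f \<Longrightarrow> Q \<in> annihilators f \<Longrightarrow> P - Q \<in> annihilators f"
  by (simp add: annihilators_def shift_op_diff)

lemma annihilators_pcompose_monom:
  "P \<in> annihilators f \<Longrightarrow> pcompose P (monom 1 q) \<in> annihilators f"
  by (simp add: annihilators_def shift_op_pcompose_monom)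

lemma annihilators_pCons_0:
  assumes "pCons 0 P \<in> annihilators f"
  shows "P \<in> annihilators f"
proof -
  have "shift_op f P h \<beta> = shift_op f (pCons 0 P) h (\<beta> - h)" for h \<beta>
    by (simp add: shift_op_pCons)
  then show ?thesis
    using assms by (simp add: annihilators_def)
qed

lemma dvd_power_if_roots_of_unity:
  fixes G :: "complex poly"
  assumes "G \<noteq> 0" and "\<And>z. poly G z = 0 \<Longrightarrow> z ^ M = 1"
  shows "G dvd (monom 1 M - 1) ^ degree G"
  using assms
proof (induction "degree G" arbitrary: G rule: less_induct)
  case less
  show ?case
  proof (cases "degree G = 0")
    case True
    then show ?thesis
      using less.prems(1) by (simp add: is_unit_iff_degree unit_imp_dvd)
  next
    case False
    then obtain z where z: "poly G z = 0"
      using fundamental_theorem_of_algebra_alt by (metis degree_pCons_0)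
    then obtain H where H: "G = [:-z, 1:] * H"
      using poly_eq_0_iff_dvd by (metis dvdE)
    have "H \<noteq> 0"
      using H less.prems(1) by auto
    then have deg: "degree G = Suc (degree H)"
      unfolding H by (subst degree_mult_eq) auto
    have "H dvd (monom 1 M - 1) ^ degree H"
      using less.hyps[of H] less.prems \<open>H \<noteq> 0\<close> deg H by simp
    moreover have "[:-z, 1:] dvd monom 1 M - 1"
      using less.prems(2)[OF z] by (simp add: poly_eq_0_iff_dvd[symmetric] poly_monom)
    ultimately have "[:-z, 1:] * H dvd (monom 1 M - 1) * (monom 1 M - 1) ^ degree H"
      by (rule mult_dvd_mono[rotated])
    then show ?thesis
      using H deg by simp
  qed
qed

text \<open>If the roots of \<open>G\<close> are closed under all powers, the powers of a root \<open>z\<close> repeat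
  within \<open>degree G + 1\<close> steps, so \<open>z\<close> is a root of unity of order at most \<open>degree G\<close>.\<close>

lemma roots_of_unity_if_roots_closed_under_powers:
  fixes G :: "complex poly"
  assumes "G \<noteq> 0" and "poly G 0 \<noteq> 0"
    and closed: "\<And>z q. poly G z = 0 \<Longrightarrow> q \<ge> 1 \<Longrightarrow> poly G (z ^ q) = 0"
    and z: "poly G z = 0"
  shows "z ^ fact (degree G) = 1"
proof -
  let ?D = "degree G" and ?R = "{x. poly G x = 0}"
  have "z \<noteq> 0"
    using assms(2) z by auto
  have "(\<lambda>j. z ^ j) ` {1..?D + 1} \<subseteq> ?R"
    using closed z by auto
  then have "card ((\<lambda>j. z ^ j) ` {1..?D + 1}) \<le> ?D"
    using card_mono[OF poly_roots_finite[OF assms(1)]] card_poly_roots_bound[OF assms(1)]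
    by (meson le_trans)
  then have "\<not> inj_on (\<lambda>j. z ^ j) {1..?D + 1}"
    by (intro pigeonhole) simp
  then obtain a b where ab: "a \<in> {1..?D + 1}" "b \<in> {1..?D + 1}" "a < b" "z ^ a = z ^ b"
    unfolding inj_on_def by (metis linorder_neqE_nat)
  have "z ^ b = z ^ a * z ^ (b - a)"
    using ab(3) by (simp add: power_add[symmetric])
  then have "z ^ (b - a) = 1"
    using ab(4) \<open>z \<noteq> 0\<close> by simp
  moreover have "(b - a) dvd fact ?D"
    using ab by (intro dvd_fact) auto
  then obtain c where "fact ?D = (b - a) * c"
    by (rule dvdE)
  ultimately show ?thesis
    by (simp add: power_mult)
qed

lemma pcompose_power: "pcompose (p ^ n) q = pcompose p q ^ n"
  by (induction n) (simp_all add: pcompose_mult pcompose_1)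

text \<open>The annihilators form an ideal that is closed under \<open>P(X) \<mapsto> P(X\<^sup>q)\<close>. Hence the roots of
  a generator are roots of unity, and some \<open>(X\<^sup>M - 1)\<^sup>D = (X - 1)\<^sup>D \<circ> X\<^sup>M\<close> annihilates \<open>f\<close>,
  i.e. the \<open>D\<close>-th difference with every step \<open>M h\<close> vanishes.\<close>

lemma annihilators_contain_diff_power:
  assumes "P \<in> annihilators f" and "P \<noteq> 0"
  obtains D where "[:-1, 1:] ^ D \<in> annihilators f"
proof -
  obtain G where G: "G \<in> annihilators f" "G \<noteq> 0"
    and G_min: "\<And>Q. Q \<in> annihilators f \<Longrightarrow> Q \<noteq> 0 \<Longrightarrow> degree G \<le> degree Q"
    using ex_has_least_nat[of "\<lambda>Q. Q \<in> annihilators f \<and> Q \<noteq> 0" P degree] assms by blast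
  have G_dvd: "G dvd Q" if "Q \<in> annihilators f" for Q
  proof -
    have "Q mod G = Q - (Q div G) * G"
      by (simp add: minus_div_mult_eq_mod)
    then have "Q mod G \<in> annihilators f"
      using annihilators_diff[OF that annihilators_mult[OF G(1)]] by simp
    then have "Q mod G = 0"
      using G_min[of "Q mod G"] degree_mod_less[OF G(2), of Q] by linarith
    then show ?thesis
      by (simp add: mod_eq_0_iff_dvd)
  qed
  have "poly G 0 \<noteq> 0"
  proof
    assume "poly G 0 = 0"
    moreover obtain a H where "G = pCons a H"
      by (cases G)
    ultimately have H: "G = pCons 0 H"
      by simp
    then have "H \<in> annihilators f" "H \<noteq> 0" "degree H < degree G"
      using G annihilators_pCons_0 by auto
    then show False
      using G_min by force
  qed
  moreover have "poly G (z ^ q) = 0" if "poly G z = 0" for z q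
  proof -
    have "G dvd pcompose G (monom 1 q)"
      by (intro G_dvd annihilators_pcompose_monom G(1))
    then obtain K where "pcompose G (monom 1 q) = G * K"
      by (rule dvdE)
    then have "poly (pcompose G (monom 1 q)) z = 0"
      using that by simp
    then show ?thesis
      by (simp add: poly_pcompose poly_monom)
  qed
  ultimately have "z ^ fact (degree G) = 1" if "poly G z = 0" for z
    using roots_of_unity_if_roots_closed_under_powers[OF G(2)] that by blast
  then have "G dvd (monom 1 (fact (degree G)) - 1) ^ degree G"
    by (rule dvd_power_if_roots_of_unity[OF G(2)])
  then obtain Q where Q: "(monom 1 (fact (degree G)) - 1) ^ degree G = Q * G"
    by (metis dvdE mult.commute)
  define M :: nat where "M = fact (degree G)"
  have "pcompose [:-1, 1:] (monom 1 M) = monom 1 M - (1 :: complex poly)"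
    by (simp add: pcompose_pCons one_pCons)
  then have "pcompose ([:-1, 1:] ^ degree G) (monom 1 M) = (monom 1 M - (1 :: complex poly)) ^ degree G"
    by (simp add: pcompose_power)
  also have "\<dots> \<in> annihilators f"
    unfolding M_def Q by (rule annihilators_mult[OF G(1)])
  finally have scaled: "shift_op f ([:-1, 1:] ^ degree G) (real M * h) \<beta> = 0" for h \<beta>
    by (simp add: annihilators_def shift_op_pcompose_monom)
  have "shift_op f ([:-1, 1:] ^ degree G) h \<beta> = 0" for h \<beta>
    using scaled[of "h / real M"] by (simp add: M_def)
  then show ?thesis
    by (intro that[of "degree G"]) (simp add: annihilators_def)
qed

lemma shift_op_fun_diff:
  "shift_op (\<lambda>x. F x - G x) P h \<beta> = shift_op F P h \<beta> - shift_op G P h \<beta>"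
  by (simp add: shift_op_def sum_subtractf[symmetric] algebra_simps)

lemma shift_op_linear_factor:
  "shift_op F ([:-1, 1:] * Q) h \<beta> = shift_op (\<lambda>x. F (x + h) - F x) Q h \<beta>"
proof -
  have "[:-1, 1:] * Q = pCons 0 Q - Q"
    by (simp add: algebra_simps)
  moreover have "shift_op F Q h (\<beta> + h) = shift_op (\<lambda>x. F (x + h)) Q h \<beta>"
    by (simp add: shift_op_def algebra_simps)
  ultimately show ?thesis
    by (simp add: shift_op_diff shift_op_pCons shift_op_fun_diff)
qed

lemma degree_forward_difference:
  fixes p :: "'a::idom poly"
  assumes "degree p \<le> Suc D"
  shows "degree (pcompose p [:h, 1:] - p) \<le> D"
proof (cases "degree p = 0")
  case True
  then show ?thesis
    by (auto elim: degree_eq_zeroE)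
next
  case False
  let ?q = "pcompose p [:h, 1:] - p"
  have "degree ?q \<le> degree p"
    using degree_diff_le[of "pcompose p [:h, 1:]" "degree p" p] by (simp add: degree_pcompose)
  moreover have "coeff ?q (degree p) = 0"
    using lead_coeff_comp[of "[:h, 1:]" p] by (simp add: degree_pcompose)
  ultimately have "degree ?q < degree p"
    using False by (metis le_neq_implies_less leading_coeff_0_iff degree_0)
  then show ?thesis
    using assms by linarith
qed

lemma shift_op_diff_power_poly:
  assumes "degree p \<le> D"
  shows "shift_op (poly p) ([:-1, 1:] ^ Suc D) h \<beta> = 0"
  using assms
proof (induction D arbitrary: p)
  case 0
  then obtain c where "p = [:c:]"
    by (auto elim: degree_eq_zeroE)
  then show ?case
    by (simp add: shift_op_def)
next
  case (Suc D)
  have "(\<lambda>x. poly p (x + h) - poly p x) = poly (pcompose p [:h, 1:] - p)"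
    by (rule ext) (simp add: poly_pcompose algebra_simps)
  then have "shift_op (poly p) ([:-1, 1:] ^ Suc (Suc D)) h \<beta>
      = shift_op (poly (pcompose p [:h, 1:] - p)) ([:-1, 1:] ^ Suc D) h \<beta>"
    by (simp only: power_Suc[of _ "Suc D"] shift_op_linear_factor)
  then show ?case
    using Suc.IH degree_forward_difference[OF Suc.prems] by simp
qed

lemma zero_if_diff_power_annihilates:
  assumes rel: "\<And>\<beta>. shift_op F ([:-1, 1:] ^ D) h \<beta> = 0"
    and init: "\<And>k. k < D \<Longrightarrow> F (x\<^sub>0 + real k * h) = 0"
  shows "F (x\<^sub>0 + real j * h) = 0"
proof (induction j rule: less_induct)
  case (less j)
  show ?case
  proof (cases "j < D")
    case False
    define i where "i = j - D"
    let ?T = "[:-1, 1:] ^ D :: complex poly"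
    have "0 = shift_op F ?T h (x\<^sub>0 + real i * h)"
      using rel by simp
    also have "\<dots> = (\<Sum>k<D. coeff ?T k * of_real (F (x\<^sub>0 + real (i + k) * h)))
        + of_real (F (x\<^sub>0 + real (i + D) * h))"
      by (simp add: shift_op_def degree_linear_power coeff_linear_power
          lessThan_Suc_atMost[symmetric] algebra_simps)
    also have "(\<Sum>k<D. coeff ?T k * of_real (F (x\<^sub>0 + real (i + k) * h))) = 0"
    proof (intro sum.neutral ballI)
      fix k assume "k \<in> {..<D}"
      then have "F (x\<^sub>0 + real (i + k) * h) = 0"
        using False by (intro less.IH) (simp add: i_def)
      then show "coeff ?T k * of_real (F (x\<^sub>0 + real (i + k) * h)) = 0"
        by simp
    qed
    finally show ?thesis
      using False by (simp add: i_def)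
  qed (use init in blast)
qed

lemma poly_interpolation:
  fixes ys :: "nat \<Rightarrow> real"
  assumes "inj_on ys {..D}"
  obtains q where "degree q \<le> D" and "\<And>k. k \<le> D \<Longrightarrow> poly q (ys k) = vals k"
  using assms
proof (induction D arbitrary: thesis)
  case 0
  then show ?case
    by (metis degree_pCons_0 le_zero_eq poly_const_conv)
next
  case (Suc D)
  obtain q where q: "degree q \<le> D" "\<And>k. k \<le> D \<Longrightarrow> poly q (ys k) = vals k"
    using Suc.IH Suc.prems(2) by (metis atMost_Suc inj_on_insert)
  define \<pi> where "\<pi> = (\<Prod>k\<le>D. [:- ys k, 1:])"
  have poly_\<pi>: "poly \<pi> y = (\<Prod>k\<le>D. y - ys k)" for y
    by (simp add: \<pi>_def poly_prod)
  have "ys (Suc D) \<noteq> ys k" if "k \<le> D" for k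
    using Suc.prems(2) that unfolding inj_on_def by force
  then have "poly \<pi> (ys (Suc D)) \<noteq> 0"
    by (simp add: poly_\<pi>)
  have "degree \<pi> \<le> Suc D"
    unfolding \<pi>_def using degree_prod_sum_le[of "{..D}" "\<lambda>k. [:- ys k, 1:]"] by simp
  define c where "c = (vals (Suc D) - poly q (ys (Suc D))) / poly \<pi> (ys (Suc D))"
  show ?case
  proof (rule Suc.prems(1)[of "q + smult c \<pi>"])
    show "degree (q + smult c \<pi>) \<le> Suc D"
      using q(1) \<open>degree \<pi> \<le> Suc D\<close> by (intro degree_add_le) (auto intro: order_trans[OF degree_smult_le])
    show "poly (q + smult c \<pi>) (ys k) = vals k" if "k \<le> Suc D" for k
      using that q(2) \<open>poly \<pi> (ys (Suc D)) \<noteq> 0\<close> by (cases "k = Suc D") (auto simp: c_def poly_\<pi>)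
  qed
qed

lemma closure_dyadic_grid: "closure {real j / 2 ^ l - real K | j l K :: nat. True} = UNIV"
proof -
  have "x \<in> closure {real j / 2 ^ l - real K | j l K :: nat. True}" for x :: real
  proof (unfold closure_approachable, intro allI impI)
    fix e :: real
    assume "e > 0"
    then obtain l :: nat where l: "(1 / 2) ^ l < e"
      using real_arch_pow_inv[of e "1 / 2"] by auto
    define K where "K = nat \<lceil>- x\<rceil>"
    define y where "y = x + real K"
    have "y \<ge> 0"
      unfolding y_def K_def by linarith
    define j where "j = nat \<lfloor>y * 2 ^ l\<rfloor>"
    have "real j = of_int \<lfloor>y * 2 ^ l\<rfloor>"
      using \<open>y \<ge> 0\<close> by (simp add: j_def)
    then have "\<bar>real j - y * 2 ^ l\<bar> \<le> 1"
      by linarith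
    then have "\<bar>real j / 2 ^ l - y\<bar> \<le> 1 / 2 ^ l"
      by (simp add: field_simps)
    then have "dist (real j / 2 ^ l - real K) x < e"
      using l by (simp add: dist_real_def y_def power_one_over)
    then show "\<exists>z\<in>{real j / 2 ^ l - real K | j l K :: nat. True}. dist z x < e"
      by blast
  qed
  then show ?thesis
    by auto
qed

text \<open>A function annihilated by \<open>(X - 1)\<^sup>D\<^sup>+\<^sup>1\<close> coincides with its interpolation polynomial on
  every arithmetic progression of step \<open>2\<^sup>-\<^sup>l\<close>. If it vanishes at \<open>0, \<dots>, D\<close>, that polynomial
  has \<open>D + 1\<close> roots, so it is \<open>0\<close>.\<close>

lemma zero_on_dyadic_grid:
  assumes rel: "\<And>h \<beta>. shift_op g ([:-1, 1:] ^ Suc D) h \<beta> = 0"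
    and zeros: "\<And>k. k \<le> D \<Longrightarrow> g (real k) = 0"
  shows "g (real j / 2 ^ l - real K) = 0"
proof -
  define t :: real where "t = 1 / 2 ^ l"
  define x\<^sub>0 :: real where "x\<^sub>0 = - real K"
  have "inj_on (\<lambda>k. x\<^sub>0 + real k * t) {..D}"
    by (auto simp: inj_on_def t_def)
  then obtain q where q: "degree q \<le> D"
    and q_interp: "\<And>k. k \<le> D \<Longrightarrow> poly q (x\<^sub>0 + real k * t) = g (x\<^sub>0 + real k * t)"
    using poly_interpolation[where vals = "\<lambda>k. g (x\<^sub>0 + real k * t)"] by metis
  define r where "r x = g x - poly q x" for x
  have "shift_op r ([:-1, 1:] ^ Suc D) t \<beta> = 0" for \<beta>
    using rel shift_op_diff_power_poly[OF q] unfolding r_def by (simp add: shift_op_fun_diff)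
  moreover have "r (x\<^sub>0 + real k * t) = 0" if "k < Suc D" for k
    using q_interp that by (simp add: r_def)
  ultimately have r_zero: "r (x\<^sub>0 + real i * t) = 0" for i
    by (rule zero_if_diff_power_annihilates)
  have "poly q (real m) = 0" if "m \<le> D" for m
  proof -
    have "x\<^sub>0 + real ((K + m) * 2 ^ l) * t = real m"
      by (simp add: x\<^sub>0_def t_def field_simps)
    then show ?thesis
      using r_zero[of "(K + m) * 2 ^ l"] zeros[OF that] by (simp add: r_def)
  qed
  then have "q = 0"
    using q by (intro poly_eqI_degree[of "real ` {..D}"]) (auto simp: card_image)
  then show ?thesis
    using r_zero[of j] by (simp add: r_def x\<^sub>0_def t_def)
qed

lemma continuous_annihilated_by_diff_power_imp_polynomial:
  assumes cont: "continuous_on UNIV F"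
    and rel: "\<And>h \<beta>. shift_op F ([:-1, 1:] ^ Suc D) h \<beta> = 0"
  shows "is_polynomial_fun F"
proof -
  have "inj_on real {..D}"
    by (auto simp: inj_on_def)
  then obtain p where p: "degree p \<le> D" and p_interp: "\<And>k. k \<le> D \<Longrightarrow> poly p (real k) = F (real k)"
    using poly_interpolation[where vals = "\<lambda>k. F (real k)"] by metis
  define g where "g x = F x - poly p x" for x
  have "shift_op g ([:-1, 1:] ^ Suc D) h \<beta> = 0" for h \<beta>
    using rel shift_op_diff_power_poly[OF p] unfolding g_def by (simp add: shift_op_fun_diff)
  moreover have "g (real k) = 0" if "k \<le> D" for k
    using p_interp[OF that] by (simp add: g_def)
  ultimately have grid_zero: "g (real j / 2 ^ l - real K) = 0" for j l K
    by (rule zero_on_dyadic_grid)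
  have "continuous_on UNIV g"
    unfolding g_def by (intro continuous_intros cont)
  have "g x = 0" for x
  proof (rule continuous_constant_on_closure[where f = g and S = "{real j / 2 ^ l - real K | j l K :: nat. True}"])
    let ?S = "{real j / 2 ^ l - real K | j l K :: nat. True}"
    show "continuous_on (closure ?S) g"
      using \<open>continuous_on UNIV g\<close> by (simp only: closure_dyadic_grid)
    show "x \<in> closure ?S"
      by (simp only: closure_dyadic_grid UNIV_I)
    show "g y = 0" if "y \<in> ?S" for y
      using that grid_zero by blast
  qed
  then show ?thesis
    unfolding is_polynomial_fun_def g_def by auto
qed

lemma continuous_shift_relation_imp_polynomial:
  fixes \<rho> :: "real \<Rightarrow> real" and c :: "nat \<Rightarrow> real"
  assumes cont: "continuous_on UNIV \<rho>"
    and nontrivial: "k\<^sub>0 < n" "c k\<^sub>0 \<noteq> 0"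
    and rel: "\<And>\<beta> h. (\<Sum>k<n. c k * \<rho> (\<beta> + real k * h)) = 0"
  shows "is_polynomial_fun \<rho>"
proof -
  define P where "P = Poly (map (\<lambda>k. complex_of_real (c k)) [0..<n])"
  have coeff_P: "coeff P k = (if k < n then complex_of_real (c k) else 0)" for k
    by (simp add: P_def nth_default_def)
  have "P \<in> annihilators \<rho>"
  proof -
    have "degree P \<le> n"
      using degree_Poly[of "map (\<lambda>k. complex_of_real (c k)) [0..<n]"] by (simp add: P_def)
    then have "shift_op \<rho> P h \<beta> = of_real (\<Sum>k<n. c k * \<rho> (\<beta> + real k * h))" for h \<beta>
      by (simp add: shift_op_eq_sum[of _ n] coeff_P lessThan_Suc_atMost[symmetric])
    then show ?thesis
      using rel by (simp add: annihilators_def)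
  qed
  moreover have "P \<noteq> 0"
    using nontrivial coeff_P[of k\<^sub>0] by auto
  ultimately obtain D where "[:-1, 1:] ^ D \<in> annihilators \<rho>"
    by (rule annihilators_contain_diff_power)
  then have "[:-1, 1:] ^ Suc D \<in> annihilators \<rho>"
    unfolding power_Suc by (rule annihilators_mult)
  then show ?thesis
    by (intro continuous_annihilated_by_diff_power_imp_polynomial[OF cont, of D])
      (simp add: annihilators_def)
qed

section \<open>Finite coordinate projections of linear families\<close>

text \<open>Induction on \<open>n\<close>: normalise an element \<open>e\<close> with
  \<open>e n = 1\<close> and apply the induction hypothesis to the part of \<open>S\<close> vanishing at \<open>n\<close>.\<close>

lemma linear_family_onto_or_annihilated:
  fixes S :: "(nat \<Rightarrow> real) set"
  assumes "s\<^sub>0 \<in> S"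
    and add: "\<And>a b. a \<in> S \<Longrightarrow> b \<in> S \<Longrightarrow> (\<lambda>i. a i + b i) \<in> S"
    and scale: "\<And>a c. a \<in> S \<Longrightarrow> (\<lambda>i. c * a i) \<in> S"
  shows "(\<forall>y. \<exists>s\<in>S. \<forall>k<n. s k = y k)
    \<or> (\<exists>c. (\<exists>k<n. c k \<noteq> 0) \<and> (\<forall>s\<in>S. (\<Sum>k<n. c k * s k) = 0))"
  using assms
proof (induction n arbitrary: S s\<^sub>0)
  case (Suc n)
  show ?case
  proof (cases "\<exists>s\<in>S. s n \<noteq> 0")
    case False
    then have "\<forall>s\<in>S. (\<Sum>k<Suc n. (if k = n then 1 else 0) * s k) = 0"
      by simp
    then show ?thesis
      by (intro disjI2 exI[of _ "\<lambda>k. if k = n then 1 else 0"]) auto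
  next
    case True
    then obtain s\<^sub>1 where "s\<^sub>1 \<in> S" "s\<^sub>1 n \<noteq> 0"
      by blast
    define e where "e i = s\<^sub>1 i / s\<^sub>1 n" for i
    have "e \<in> S" "e n = 1"
      using Suc.prems(3)[OF \<open>s\<^sub>1 \<in> S\<close>, of "1 / s\<^sub>1 n"] \<open>s\<^sub>1 n \<noteq> 0\<close>
      by (simp_all add: e_def[abs_def])
    define S' where "S' = {s\<in>S. s n = 0}"
    have proj: "(\<lambda>i. s i - s n * e i) \<in> S'" if "s \<in> S" for s
      using Suc.prems(2)[OF that Suc.prems(3)[OF \<open>e \<in> S\<close>, of "- s n"]] \<open>e n = 1\<close>
      by (simp add: S'_def)
    have "(\<lambda>i. 0 * e i) \<in> S'"
      using Suc.prems(3)[OF \<open>e \<in> S\<close>, of 0] by (simp add: S'_def)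
    then have "(\<forall>y. \<exists>s\<in>S'. \<forall>k<n. s k = y k)
        \<or> (\<exists>c. (\<exists>k<n. c k \<noteq> 0) \<and> (\<forall>s\<in>S'. (\<Sum>k<n. c k * s k) = 0))"
    proof (rule Suc.IH)
      show "(\<lambda>i. a i + b i) \<in> S'" if "a \<in> S'" "b \<in> S'" for a b
        using that Suc.prems(2)[of a b] by (simp add: S'_def)
      show "(\<lambda>i. c * a i) \<in> S'" if "a \<in> S'" for a c
        using that Suc.prems(3)[of a c] by (simp add: S'_def)
    qed
    then consider
        "\<forall>y. \<exists>s\<in>S'. \<forall>k<n. s k = y k"
      | c where "\<exists>k<n. c k \<noteq> 0" "\<forall>s\<in>S'. (\<Sum>k<n. c k * s k) = 0"
      by blast
    then show ?thesis
    proof cases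
      case 1
      have "\<exists>s\<in>S. \<forall>k<Suc n. s k = y k" for y
      proof -
        obtain t where t: "t \<in> S'" "\<forall>k<n. t k = y k - y n * e k"
          using 1[rule_format, of "\<lambda>k. y k - y n * e k"] by blast
        have "t \<in> S"
          using t(1) by (simp add: S'_def)
        then have "(\<lambda>i. t i + y n * e i) \<in> S"
          using Suc.prems(3)[OF \<open>e \<in> S\<close>] by (rule Suc.prems(2))
        moreover have "t k + y n * e k = y k" if "k < Suc n" for k
        proof (cases "k = n")
          case True
          then show ?thesis
            using t(1) \<open>e n = 1\<close> by (simp add: S'_def)
        next
          case False
          then show ?thesis
            using that t(2) by simp
        qed
        ultimately show ?thesis
          by (intro bexI[of _ "\<lambda>i. t i + y n * e i"]) auto
      qed
      then show ?thesis
        by blast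
    next
      case (2 c)
      define c' where "c' k = (if k = n then - (\<Sum>j<n. c j * e j) else c k)" for k
      have "(\<Sum>k<Suc n. c' k * s k) = 0" if "s \<in> S" for s
      proof -
        have "0 = (\<Sum>k<n. c k * (s k - s n * e k))"
          using 2(2) proj[OF that] by simp
        also have "\<dots> = (\<Sum>k<n. c' k * s k) - s n * (\<Sum>k<n. c k * e k)"
          by (simp add: c'_def algebra_simps sum_subtractf sum_distrib_left)
        finally show ?thesis
          by (simp add: c'_def algebra_simps)
      qed
      moreover have "\<exists>k<Suc n. c' k \<noteq> 0"
        using 2(1) by (auto simp: c'_def)
      ultimately show ?thesis
        by blast
    qed
  qed
qed auto

section \<open>Realizations closed under linear combinations\<close>

definition scale_output :: "real \<Rightarrow> layer list \<Rightarrow> layer list" where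
  "scale_output c ls = butlast ls @ [(\<lambda>i j. c * fst (last ls) i j, \<lambda>i. c * snd (last ls) i)]"

lemma layers_eval_scale_output:
  assumes "length ls = length ms" and "ms \<noteq> []"
  shows "layers_eval \<rho> n ms (scale_output c ls) v = (\<lambda>i. c * layers_eval \<rho> n ms ls v i)"
  using assms
proof (induction ms arbitrary: n ls v)
  case (Cons m ms)
  obtain l ls' where ls: "ls = l # ls'"
    using Cons.prems by (cases ls) auto
  show ?case
  proof (cases ms)
    case Nil
    then show ?thesis
      using Cons.prems ls
      by (auto simp: scale_output_def affine_step_def sum_distrib_left algebra_simps)
  next
    case (Cons m' ms')
    then obtain l' ls'' where "ls' = l' # ls''"
      using Cons.prems ls by (cases ls') auto
    then have "scale_output c ls = l # scale_output c ls'" "scale_output c ls' \<noteq> []"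
      using ls by (simp_all add: scale_output_def)
    then show ?thesis
      using Cons.IH[of ls'] Cons.prems ls \<open>ms = m' # ms'\<close> \<open>ls' = l' # ls''\<close>
      by (auto simp: neq_Nil_conv)
  qed
qed simp

lemma RNN_scale:
  assumes "length Ns \<ge> 2" and "f \<in> RNN \<rho> \<Omega> Ns"
  shows "(\<lambda>x i. c * f x i) \<in> RNN \<rho> \<Omega> Ns"
proof -
  obtain W b ls where net: "is_network Ns (W, b, ls)" and f: "f = realization \<rho> \<Omega> Ns (W, b, ls)"
    using assms(2) unfolding RNN_def by auto
  have "tl Ns \<noteq> []"
    using assms(1) by (cases Ns) auto
  moreover have "length ls = length (tl Ns)"
    using net by (simp add: is_network_def)
  ultimately have "realization \<rho> \<Omega> Ns (W, b, scale_output c ls) = (\<lambda>x i. c * f x i)"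
    unfolding f realization_def by (auto simp: layers_eval_scale_output Let_def)
  moreover have "is_network Ns (W, b, scale_output c ls)"
    using net assms(1) by (auto simp: is_network_def scale_output_def)
  ultimately show ?thesis
    unfolding RNN_def by (intro CollectI exI[of _ "(W, b, scale_output c ls)"]) simp
qed

lemma RNN_add:
  assumes "length Ns \<ge> 2" and "fun_set_convex (RNN \<rho> \<Omega> Ns)"
    and "f \<in> RNN \<rho> \<Omega> Ns" and "g \<in> RNN \<rho> \<Omega> Ns"
  shows "(\<lambda>x i. f x i + g x i) \<in> RNN \<rho> \<Omega> Ns"
proof -
  have "(\<lambda>x i. 1 / 2 * f x i + (1 - 1 / 2) * g x i) \<in> RNN \<rho> \<Omega> Ns"
    using assms(2)[unfolded fun_set_convex_def, rule_format, OF assms(3,4), where t = "1 / 2"]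
    by simp
  from RNN_scale[OF assms(1) this, of 2] show ?thesis
    by (simp add: algebra_simps)
qed

lemma RNN_nonempty:
  assumes "length Ns \<ge> 1"
  shows "RNN \<rho> \<Omega> Ns \<noteq> {}"
proof -
  have "is_network Ns (\<lambda>_. 0, \<lambda>_. 0, replicate (length Ns - 1) (\<lambda>_ _. 0, \<lambda>_. 0))"
    using assms by (simp add: is_network_def)
  then show ?thesis
    unfolding RNN_def by blast
qed

lemma RNN_samples_onto_or_annihilated:
  fixes xs :: "nat \<Rightarrow> real ^ 'd::finite"
  assumes "length Ns \<ge> 2" and "fun_set_convex (RNN \<rho> \<Omega> Ns)"
  shows "(\<forall>y. \<exists>f\<in>RNN \<rho> \<Omega> Ns. \<forall>k<n. f (xs k) 0 = y k)
    \<or> (\<exists>c. (\<exists>k<n. c k \<noteq> 0) \<and> (\<forall>f\<in>RNN \<rho> \<Omega> Ns. (\<Sum>k<n. c k * f (xs k) 0) = 0))"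
proof -
  define S where "S = (\<lambda>f k. f (xs k) 0) ` RNN \<rho> \<Omega> Ns"
  obtain f where "f \<in> RNN \<rho> \<Omega> Ns"
    using RNN_nonempty[of Ns] assms(1) by fastforce
  then have "(\<lambda>k. f (xs k) 0) \<in> S"
    by (simp add: S_def)
  moreover have "(\<lambda>i. a i + b i) \<in> S" if a: "a \<in> S" and b: "b \<in> S" for a b
  proof -
    obtain f where "a = (\<lambda>k. f (xs k) 0)" "f \<in> RNN \<rho> \<Omega> Ns"
      using a unfolding S_def by (rule imageE)
    moreover obtain g where "b = (\<lambda>k. g (xs k) 0)" "g \<in> RNN \<rho> \<Omega> Ns"
      using b unfolding S_def by (rule imageE)
    ultimately show ?thesis
      unfolding S_def using RNN_add[OF assms] by (intro image_eqI[of _ _ "\<lambda>x i. f x i + g x i"]) simp_all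
  qed
  moreover have "(\<lambda>i. c * a i) \<in> S" if a: "a \<in> S" for a c
  proof -
    obtain f where "a = (\<lambda>k. f (xs k) 0)" "f \<in> RNN \<rho> \<Omega> Ns"
      using a unfolding S_def by (rule imageE)
    then show ?thesis
      unfolding S_def using RNN_scale[OF assms(1)] by (intro image_eqI[of _ _ "\<lambda>x i. c * f x i"]) simp_all
  qed
  ultimately have "(\<forall>y. \<exists>s\<in>S. \<forall>k<n. s k = y k) \<or> (\<exists>c. (\<exists>k<n. c k \<noteq> 0) \<and> (\<forall>s\<in>S. (\<Sum>k<n. c k * s k) = 0))"
    by (rule linear_family_onto_or_annihilated)
  then show ?thesis
    unfolding S_def by (simp add: Bex_def)
qed

section \<open>Networks computing a scalar chain\<close>

fun scalar_chain :: "(real \<Rightarrow> real) \<Rightarrow> (real \<times> real) list \<Rightarrow> real \<Rightarrow> real" where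
  "scalar_chain \<rho> [] s = s"
| "scalar_chain \<rho> ((a, b) # hs) s = scalar_chain \<rho> hs (\<rho> (a * s + b))"

lemma scalar_chain_append: "scalar_chain \<rho> (hs @ [(a, b)]) s = \<rho> (a * scalar_chain \<rho> hs s + b)"
  by (induction \<rho> hs s rule: scalar_chain.induct) auto

lemma scalar_chain_fixed_point:
  "\<rho> (a * y + b) = y \<Longrightarrow> scalar_chain \<rho> (replicate j (a, b)) y = y"
  by (induction j) auto

lemma continuous_on_scalar_chain:
  "continuous_on UNIV \<rho> \<Longrightarrow> continuous_on UNIV (scalar_chain \<rho> hs)"
proof (induction hs)
  case (Cons ab hs)
  obtain a b where ab: "ab = (a, b)"
    by (cases ab)
  have "continuous_on UNIV (\<lambda>s. \<rho> (a * s + b))"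
    by (rule continuous_on_compose2[OF Cons.prems]) (auto intro!: continuous_intros)
  then show ?case
    using continuous_on_compose2[OF Cons.IH[OF Cons.prems]] by (simp add: ab)
qed (simp add: continuous_on_id)

definition scalar_layer :: "real \<times> real \<Rightarrow> layer" where
  "scalar_layer ab = (\<lambda>i j. if i = 0 \<and> j = 0 then fst ab else 0, \<lambda>i. if i = 0 then snd ab else 0)"

lemma affine_step_scalar_layer:
  assumes "n \<ge> 1" and "m \<ge> 1"
  shows "affine_step n m (scalar_layer (a, b)) v 0 = a * v 0 + b"
proof -
  have "(\<Sum>j<n. (if j = 0 then a else 0) * v j) = (\<Sum>j<n. if j = 0 then a * v j else 0)"
    by (rule sum.cong) auto
  then show ?thesis
    using assms unfolding affine_step_def scalar_layer_def fst_conv snd_conv by simp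
qed

lemma layers_eval_scalar_chain:
  assumes "length ms = Suc (length hs)" and "\<forall>m\<in>set ms. m \<ge> 1" and "n \<ge> 1"
  shows "layers_eval \<rho> n ms (map scalar_layer (hs @ [(1, 0)])) v 0 = scalar_chain \<rho> hs (v 0)"
  using assms
proof (induction hs arbitrary: n ms v)
  case Nil
  then obtain m where "ms = [m]" "m \<ge> 1"
    by (cases ms) auto
  then show ?case
    using affine_step_scalar_layer[OF Nil.prems(3), of m 1 0 v] by simp
next
  case (Cons ab hs)
  obtain a b where ab: "ab = (a, b)"
    by (cases ab)
  obtain m m' ms' where ms: "ms = m # m' # ms'"
    using Cons.prems(1) by (metis Suc_length_conv)
  then have "m \<ge> 1"
    using Cons.prems(2) by simp
  define v' where "v' i = (if i < m then \<rho> (affine_step n m (scalar_layer ab) v i) else 0)" for i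
  have "v' 0 = \<rho> (a * v 0 + b)"
    using affine_step_scalar_layer[OF Cons.prems(3) \<open>m \<ge> 1\<close>] \<open>m \<ge> 1\<close> by (simp add: v'_def ab)
  moreover have "layers_eval \<rho> n ms (map scalar_layer (ab # hs @ [(1, 0)])) v
      = layers_eval \<rho> m (m' # ms') (map scalar_layer (hs @ [(1, 0)])) v'"
    using ms by (cases hs) (simp_all add: v'_def[abs_def])
  ultimately show ?case
    using Cons.IH[of "m' # ms'" m v'] Cons.prems ms \<open>m \<ge> 1\<close> by (simp add: ab)
qed

definition chain_network :: "real ^ 'd \<Rightarrow> real \<Rightarrow> (real \<times> real) list \<Rightarrow> 'd::finite network" where
  "chain_network w b hs =
    (\<lambda>j. if j = 0 then fst (hd hs) *\<^sub>R w else 0,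
     \<lambda>j. if j = 0 then fst (hd hs) * b + snd (hd hs) else 0,
     map scalar_layer (tl hs @ [(1, 0)]))"

lemma is_network_chain_network:
  "length hs = length Ns - 1 \<Longrightarrow> length Ns \<ge> 2 \<Longrightarrow> is_network Ns (chain_network w b hs)"
  by (cases hs) (auto simp: is_network_def chain_network_def)

lemma realization_chain_network:
  assumes "length Ns \<ge> 2" and "\<forall>N\<in>set Ns. N \<ge> 1" and "length hs = length Ns - 1"
    and "x \<in> \<Omega>"
  shows "realization \<rho> \<Omega> Ns (chain_network w b hs) x 0 = scalar_chain \<rho> hs (w \<bullet> x + b)"
proof -
  obtain a\<^sub>1 b\<^sub>1 hs' where hs: "hs = (a\<^sub>1, b\<^sub>1) # hs'"
    using assms(1,3) by (cases hs) auto
  obtain N\<^sub>1 Ns' where Ns: "Ns = N\<^sub>1 # Ns'"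
    using assms(1) by (cases Ns) auto
  have "N\<^sub>1 \<ge> 1"
    using assms(2) Ns by simp
  define x\<^sub>1 where "x\<^sub>1 j = (if j < N\<^sub>1 then \<rho> ((if j = 0 then a\<^sub>1 *\<^sub>R w else 0) \<bullet> x
    + (if j = 0 then a\<^sub>1 * b + b\<^sub>1 else 0)) else 0)" for j
  have "realization \<rho> \<Omega> Ns (chain_network w b hs) x
      = layers_eval \<rho> N\<^sub>1 Ns' (map scalar_layer (hs' @ [(1, 0)])) x\<^sub>1"
    using assms(4) unfolding realization_def chain_network_def hs Ns x\<^sub>1_def list.sel fst_conv snd_conv
    by simp
  moreover have "layers_eval \<rho> N\<^sub>1 Ns' (map scalar_layer (hs' @ [(1, 0)])) x\<^sub>1 0
      = scalar_chain \<rho> hs' (x\<^sub>1 0)"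
    using assms(2,3) hs Ns \<open>N\<^sub>1 \<ge> 1\<close> by (intro layers_eval_scalar_chain) auto
  moreover have "x\<^sub>1 0 = \<rho> (a\<^sub>1 * (w \<bullet> x + b) + b\<^sub>1)"
    using \<open>N\<^sub>1 \<ge> 1\<close> by (simp add: x\<^sub>1_def algebra_simps)
  ultimately show ?thesis
    by (simp add: hs)
qed

lemma affine_on_segment_in_interior:
  fixes \<Omega> :: "(real ^ 'd::finite) set"
  assumes "interior \<Omega> \<noteq> {}"
  obtains x\<^sub>0 e :: "real ^ 'd" and w :: "real ^ 'd" and b :: real
  where "\<And>t. t \<in> {0..1} \<Longrightarrow> x\<^sub>0 + t *\<^sub>R e \<in> \<Omega>"
    and "\<And>t. w \<bullet> (x\<^sub>0 + t *\<^sub>R e) + b = A\<^sub>0 + t * (A\<^sub>1 - A\<^sub>0)"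
proof -
  obtain x\<^sub>0 \<epsilon> where "\<epsilon> > 0" "ball x\<^sub>0 \<epsilon> \<subseteq> \<Omega>"
    using assms mem_interior by blast
  obtain e :: "real ^ 'd" where e: "norm e = \<epsilon> / 2"
    using vector_choose_size[of "\<epsilon> / 2"] \<open>\<epsilon> > 0\<close> by auto
  have "x\<^sub>0 + t *\<^sub>R e \<in> \<Omega>" if "t \<in> {0..1}" for t
  proof -
    have "dist x\<^sub>0 (x\<^sub>0 + t *\<^sub>R e) = \<bar>t\<bar> * (\<epsilon> / 2)"
      by (simp add: dist_norm e)
    also have "\<dots> < \<epsilon>"
      using that \<open>\<epsilon> > 0\<close> by (simp add: mult_le_cancel_right1)
    finally show ?thesis
      using \<open>ball x\<^sub>0 \<epsilon> \<subseteq> \<Omega>\<close> by auto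
  qed
  moreover have "e \<noteq> 0"
    using e \<open>\<epsilon> > 0\<close> by auto
  then have "e \<bullet> e > 0"
    by simp
  then have "((A\<^sub>1 - A\<^sub>0) / (e \<bullet> e)) *\<^sub>R e \<bullet> (x\<^sub>0 + t *\<^sub>R e) + (A\<^sub>0 - ((A\<^sub>1 - A\<^sub>0) / (e \<bullet> e)) *\<^sub>R e \<bullet> x\<^sub>0)
      = A\<^sub>0 + t * (A\<^sub>1 - A\<^sub>0)" for t
    by (simp add: inner_add_right field_simps)
  ultimately show ?thesis
    by (rule that)
qed

text \<open>Precomposing with an affine map that sends \<open>\<rho> p\<close> to \<open>p\<close> and \<open>\<rho> q\<close> to \<open>q\<close> makes both
  values fixed points.\<close>

lemma affine_fixed_points:
  fixes \<rho> :: "real \<Rightarrow> real"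
  assumes "\<rho> p \<noteq> \<rho> q"
  obtains a b where "\<rho> (a * \<rho> p + b) = \<rho> p" and "\<rho> (a * \<rho> q + b) = \<rho> q"
proof -
  define a where "a = (q - p) / (\<rho> q - \<rho> p)"
  have "a * (\<rho> q - \<rho> p) = q - p"
    using assms by (simp add: a_def)
  then have "a * \<rho> q + (p - a * \<rho> p) = q"
    by (simp add: algebra_simps)
  then show ?thesis
    by (intro that[of a "p - a * \<rho> p"]) simp_all
qed

text \<open>Input \<open>x\<^sub>0 + t e\<close> yields the preactivation \<open>\<rho> p + t (\<rho> q - \<rho> p)\<close> in the first layer,
  all middle layers fix \<open>\<rho> p\<close> and \<open>\<rho> q\<close>, and the last hidden layer is \<open>s \<mapsto> \<rho> (\<alpha> s + \<beta>)\<close>.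
  By the intermediate value theorem the values before the last hidden layer cover
  \<open>n\<close> equally spaced points, and affine reparametrisation of \<open>(\<alpha>, \<beta>)\<close> gives every
  arithmetic progression.\<close>

lemma network_samples_shifts:
  fixes \<rho> :: "real \<Rightarrow> real" and \<Omega> :: "(real ^ 'd::finite) set"
  assumes L: "length Ns \<ge> 2" and pos: "\<forall>N\<in>set Ns. N \<ge> 1" and "interior \<Omega> \<noteq> {}"
    and cont: "continuous_on UNIV \<rho>" and "\<rho> p \<noteq> \<rho> q"
  obtains xs :: "nat \<Rightarrow> real ^ 'd"
  where "\<And>\<beta> h. \<exists>\<theta>. is_network Ns \<theta> \<and> (\<forall>k<n. realization \<rho> \<Omega> Ns \<theta> (xs k) 0 = \<rho> (\<beta> + real k * h))"
proof -
  define A\<^sub>0 A\<^sub>1 where "A\<^sub>0 = \<rho> p" and "A\<^sub>1 = \<rho> q"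
  obtain x\<^sub>0 e w b\<^sub>0 where seg: "\<And>t. t \<in> {0..1} \<Longrightarrow> x\<^sub>0 + t *\<^sub>R e \<in> \<Omega>"
    and lin: "\<And>t. w \<bullet> (x\<^sub>0 + t *\<^sub>R e) + b\<^sub>0 = A\<^sub>0 + t * (A\<^sub>1 - A\<^sub>0)"
    using affine_on_segment_in_interior[OF \<open>interior \<Omega> \<noteq> {}\<close>, of A\<^sub>0 A\<^sub>1] by blast
  obtain a b where fix\<^sub>0: "\<rho> (a * A\<^sub>0 + b) = A\<^sub>0" and fix\<^sub>1: "\<rho> (a * A\<^sub>1 + b) = A\<^sub>1"
    unfolding A\<^sub>0_def A\<^sub>1_def using affine_fixed_points[of \<rho> p q] \<open>\<rho> p \<noteq> \<rho> q\<close> by blast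
  define reps where "reps = replicate (length Ns - 2) (a, b)"
  define net where "net \<alpha> \<beta> = chain_network w b\<^sub>0 (reps @ [(\<alpha>, \<beta>)])" for \<alpha> \<beta>
  have "length (reps @ [(\<alpha>, \<beta>)]) = length Ns - 1" for \<alpha> \<beta>
    using L by (simp add: reps_def)
  then have net: "is_network Ns (net \<alpha> \<beta>)"
    and net_val: "x \<in> \<Omega> \<Longrightarrow> realization \<rho> \<Omega> Ns (net \<alpha> \<beta>) x 0
      = \<rho> (\<alpha> * scalar_chain \<rho> reps (w \<bullet> x + b\<^sub>0) + \<beta>)" for \<alpha> \<beta> x
    using L pos by (simp_all add: net_def is_network_chain_network realization_chain_network scalar_chain_append)
  define g where "g t = scalar_chain \<rho> reps (A\<^sub>0 + t * (A\<^sub>1 - A\<^sub>0))" for t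
  have g_eq: "g t = scalar_chain \<rho> reps (w \<bullet> (x\<^sub>0 + t *\<^sub>R e) + b\<^sub>0)" for t
    by (simp only: g_def lin)
  have "continuous_on UNIV g"
    unfolding g_def
    by (rule continuous_on_compose2[OF continuous_on_scalar_chain[OF cont]])
      (auto intro!: continuous_intros)
  then have "continuous_on (closed_segment 0 1) g"
    by (rule continuous_on_subset) simp
  moreover have "g 0 = A\<^sub>0" "g 1 = A\<^sub>1"
    unfolding g_def reps_def
    using scalar_chain_fixed_point[of \<rho> a _ b, OF fix\<^sub>0] scalar_chain_fixed_point[of \<rho> a _ b, OF fix\<^sub>1]
    by simp_all
  ultimately have IVT: "\<exists>\<tau>\<in>{0..1}. g \<tau> = y" if "y \<in> closed_segment A\<^sub>0 A\<^sub>1" for y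
    using IVT'_closed_segment_real[of y g 0 1] that by (simp add: closed_segment_eq_real_ivl1)
  have "\<exists>\<tau>\<in>{0..1}. g \<tau> = A\<^sub>0 + real k / real n * (A\<^sub>1 - A\<^sub>0)" if "k < n" for k
  proof (rule IVT)
    have "A\<^sub>0 + real k / real n * (A\<^sub>1 - A\<^sub>0)
        = (1 - real k / real n) *\<^sub>R A\<^sub>0 + (real k / real n) *\<^sub>R A\<^sub>1"
      using that by (simp add: field_simps)
    moreover have "0 \<le> real k / real n" "real k / real n \<le> 1"
      using that by auto
    ultimately show "A\<^sub>0 + real k / real n * (A\<^sub>1 - A\<^sub>0) \<in> closed_segment A\<^sub>0 A\<^sub>1"
      unfolding in_segment by blast
  qed
  then obtain \<tau> where \<tau>: "\<And>k. k < n \<Longrightarrow> \<tau> k \<in> {0..1} \<and> g (\<tau> k) = A\<^sub>0 + real k / real n * (A\<^sub>1 - A\<^sub>0)"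
    by metis
  have "\<exists>\<theta>. is_network Ns \<theta>
      \<and> (\<forall>k<n. realization \<rho> \<Omega> Ns \<theta> (x\<^sub>0 + \<tau> k *\<^sub>R e) 0 = \<rho> (\<beta> + real k * h))" for \<beta> h
  proof (intro exI conjI allI impI)
    define \<alpha> where "\<alpha> = h * real n / (A\<^sub>1 - A\<^sub>0)"
    show "is_network Ns (net \<alpha> (\<beta> - \<alpha> * A\<^sub>0))"
      by (rule net)
    fix k assume "k < n"
    have "A\<^sub>1 - A\<^sub>0 \<noteq> 0"
      using \<open>\<rho> p \<noteq> \<rho> q\<close> by (simp add: A\<^sub>0_def A\<^sub>1_def)
    then have "\<alpha> * (g (\<tau> k) - A\<^sub>0) = real k * h"
      using \<tau>[OF \<open>k < n\<close>] \<open>k < n\<close> by (simp add: \<alpha>_def)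
    then have "\<alpha> * g (\<tau> k) + (\<beta> - \<alpha> * A\<^sub>0) = \<beta> + real k * h"
      by (simp add: algebra_simps)
    moreover have "x\<^sub>0 + \<tau> k *\<^sub>R e \<in> \<Omega>"
      using seg \<tau>[OF \<open>k < n\<close>] by blast
    ultimately show "realization \<rho> \<Omega> Ns (net \<alpha> (\<beta> - \<alpha> * A\<^sub>0)) (x\<^sub>0 + \<tau> k *\<^sub>R e) 0
        = \<rho> (\<beta> + real k * h)"
      by (simp only: net_val g_eq)
  qed
  then show ?thesis
    by (rule that)
qed

section \<open>Lipschitz dependence of realizations on the parameters\<close>

definition near_on :: "'a set \<Rightarrow> real \<Rightarrow> real \<Rightarrow> ('a \<Rightarrow> real) \<Rightarrow> ('a \<Rightarrow> real) \<Rightarrow> bool" where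
  "near_on A R \<delta> u v \<longleftrightarrow> (\<forall>j\<in>A. \<bar>u j\<bar> \<le> R \<and> \<bar>v j\<bar> \<le> R \<and> \<bar>u j - v j\<bar> \<le> \<delta>)"

lemma near_on_mono:
  "near_on A R \<delta> u v \<Longrightarrow> R \<le> R' \<Longrightarrow> \<delta> \<le> \<delta>' \<Longrightarrow> near_on A R' \<delta>' u v"
  unfolding near_on_def by (meson order_trans)

lemma abs_mult_le: "\<bar>a\<bar> \<le> R \<Longrightarrow> \<bar>x\<bar> \<le> R \<Longrightarrow> \<bar>a * x\<bar> \<le> R * (R::real)"
  unfolding abs_mult by (rule mult_mono) auto

lemma abs_mult_diff_le:
  fixes a a' x x' R \<delta> :: real
  assumes "\<bar>a'\<bar> \<le> R" "\<bar>a - a'\<bar> \<le> \<delta>" "\<bar>x\<bar> \<le> R" "\<bar>x - x'\<bar> \<le> \<delta>"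
  shows "\<bar>a * x - a' * x'\<bar> \<le> 2 * R * \<delta>"
proof -
  have "a * x - a' * x' = (a - a') * x + a' * (x - x')"
    by (simp add: algebra_simps)
  then have "\<bar>a * x - a' * x'\<bar> \<le> \<bar>a - a'\<bar> * \<bar>x\<bar> + \<bar>a'\<bar> * \<bar>x - x'\<bar>"
    by (metis abs_mult abs_triangle_ineq)
  also have "\<dots> \<le> \<delta> * R + R * \<delta>"
    using assms by (intro add_mono mult_mono) auto
  finally show ?thesis
    by simp
qed

lemma near_on_affine:
  assumes "finite J"
    and A: "near_on (I \<times> J) R \<delta> (case_prod A) (case_prod A')"
    and b: "near_on I R \<delta> b b'" and v: "near_on J R \<delta> v v'"
  shows "near_on I (real (card J) * R * R + R) ((2 * real (card J) * R + 1) * \<delta>)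
    (\<lambda>i. (\<Sum>j\<in>J. A i j * v j) + b i) (\<lambda>i. (\<Sum>j\<in>J. A' i j * v' j) + b' i)"
  unfolding near_on_def
proof (intro ballI conjI)
  fix i assume "i \<in> I"
  have A_i: "\<bar>A i j\<bar> \<le> R" "\<bar>A' i j\<bar> \<le> R" "\<bar>A i j - A' i j\<bar> \<le> \<delta>" if "j \<in> J" for j
    using A \<open>i \<in> I\<close> that by (auto simp: near_on_def)
  have v_j: "\<bar>v j\<bar> \<le> R" "\<bar>v' j\<bar> \<le> R" "\<bar>v j - v' j\<bar> \<le> \<delta>" if "j \<in> J" for j
    using v that by (auto simp: near_on_def)
  have b_i: "\<bar>b i\<bar> \<le> R" "\<bar>b' i\<bar> \<le> R" "\<bar>b i - b' i\<bar> \<le> \<delta>"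
    using b \<open>i \<in> I\<close> by (auto simp: near_on_def)
  have "\<bar>\<Sum>j\<in>J. A i j * v j\<bar> \<le> (\<Sum>j\<in>J. R * R)"
    by (intro order_trans[OF sum_abs] sum_mono abs_mult_le A_i v_j)
  then show "\<bar>(\<Sum>j\<in>J. A i j * v j) + b i\<bar> \<le> real (card J) * R * R + R"
    using abs_triangle_ineq[of "\<Sum>j\<in>J. A i j * v j" "b i"] b_i(1) by simp
  have "\<bar>\<Sum>j\<in>J. A' i j * v' j\<bar> \<le> (\<Sum>j\<in>J. R * R)"
    by (intro order_trans[OF sum_abs] sum_mono abs_mult_le A_i v_j)
  then show "\<bar>(\<Sum>j\<in>J. A' i j * v' j) + b' i\<bar> \<le> real (card J) * R * R + R"
    using abs_triangle_ineq[of "\<Sum>j\<in>J. A' i j * v' j" "b' i"] b_i(2) by simp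
  have "\<bar>\<Sum>j\<in>J. A i j * v j - A' i j * v' j\<bar> \<le> (\<Sum>j\<in>J. 2 * R * \<delta>)"
    by (intro order_trans[OF sum_abs] sum_mono abs_mult_diff_le A_i v_j)
  then have "\<bar>(\<Sum>j\<in>J. A i j * v j) - (\<Sum>j\<in>J. A' i j * v' j)\<bar> \<le> real (card J) * (2 * R * \<delta>)"
    by (simp add: sum_subtractf)
  then show "\<bar>((\<Sum>j\<in>J. A i j * v j) + b i) - ((\<Sum>j\<in>J. A' i j * v' j) + b' i)\<bar>
      \<le> (2 * real (card J) * R + 1) * \<delta>"
    using b_i(3) by (simp add: abs_le_iff algebra_simps)
qed

lemma near_on_activation:
  assumes lip: "K-lipschitz_on {-X..X} \<rho>" and "near_on I X \<delta> u v"
  shows "near_on I (\<bar>\<rho> 0\<bar> + K * X) (K * \<delta>) (\<lambda>i. \<rho> (u i)) (\<lambda>i. \<rho> (v i))"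
  unfolding near_on_def
proof (intro ballI conjI)
  fix i assume "i \<in> I"
  then have uv: "\<bar>u i\<bar> \<le> X" "\<bar>v i\<bar> \<le> X" "\<bar>u i - v i\<bar> \<le> \<delta>"
    using assms(2) by (auto simp: near_on_def)
  have "K \<ge> 0"
    using lip by (rule lipschitz_on_nonneg)
  have dist: "\<bar>\<rho> y - \<rho> y'\<bar> \<le> K * \<bar>y - y'\<bar>" if "\<bar>y\<bar> \<le> X" "\<bar>y'\<bar> \<le> X" for y y'
    using lipschitz_onD[OF lip, of y y'] that by (auto simp: dist_real_def abs_le_iff)
  have "\<bar>\<rho> y\<bar> \<le> \<bar>\<rho> 0\<bar> + K * X" if "\<bar>y\<bar> \<le> X" for y
  proof -
    have "\<bar>\<rho> y - \<rho> 0\<bar> \<le> K * \<bar>y\<bar>"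
      using dist[of y 0] that by simp
    also have "\<dots> \<le> K * X"
      using that \<open>K \<ge> 0\<close> by (rule mult_left_mono)
    finally show ?thesis
      by linarith
  qed
  then show "\<bar>\<rho> (u i)\<bar> \<le> \<bar>\<rho> 0\<bar> + K * X" "\<bar>\<rho> (v i)\<bar> \<le> \<bar>\<rho> 0\<bar> + K * X"
    using uv by blast+
  show "\<bar>\<rho> (u i) - \<rho> (v i)\<bar> \<le> K * \<delta>"
    using dist[OF uv(1,2)] mult_left_mono[OF uv(3) \<open>K \<ge> 0\<close>] by linarith
qed

lemma locally_lipschitz_on_interval:
  assumes "locally_lipschitz \<rho>"
  obtains K where "K-lipschitz_on {-X..X} \<rho>"
proof -
  have "local_lipschitz {0::real} {-X..X} (\<lambda>_. \<rho>)"
    unfolding local_lipschitz_def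
  proof (intro ballI)
    fix x t assume "x \<in> {-X..X}" "t \<in> {0::real}"
    obtain e K where "e > 0" "K-lipschitz_on (cball x e) \<rho>"
      using assms unfolding locally_lipschitz_def by blast
    then show "\<exists>u>0. \<exists>L. \<forall>t\<in>cball t u \<inter> {0}. L-lipschitz_on (cball x u \<inter> {-X..X}) \<rho>"
      by (intro exI[of _ e] conjI exI[of _ K]) (auto intro: lipschitz_on_subset)
  qed
  then obtain K where "\<And>t. t \<in> {0::real} \<Longrightarrow> K-lipschitz_on {-X..X} \<rho>"
    by (rule local_lipschitz_compact_implies_lipschitz) auto
  then show ?thesis
    using that by blast
qed

lemma locally_lipschitz_imp_continuous:
  assumes "locally_lipschitz \<rho>"
  shows "continuous_on UNIV \<rho>"
proof -
  have "isCont \<rho> x" for x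
  proof -
    obtain K where "K-lipschitz_on {-(\<bar>x\<bar> + 1)..\<bar>x\<bar> + 1} \<rho>"
      using locally_lipschitz_on_interval[OF assms] .
    then have "continuous_on {-(\<bar>x\<bar> + 1)..\<bar>x\<bar> + 1} \<rho>"
      by (rule lipschitz_on_continuous_on)
    moreover have "x \<in> interior {-(\<bar>x\<bar> + 1)..\<bar>x\<bar> + 1}"
      by auto
    ultimately show ?thesis
      using continuous_on_interior by blast
  qed
  then show ?thesis
    by (simp add: continuous_on_eq_continuous_at)
qed

fun layers_near :: "real \<Rightarrow> real \<Rightarrow> nat \<Rightarrow> nat list \<Rightarrow> layer list \<Rightarrow> layer list \<Rightarrow> bool" where
  "layers_near R \<delta> n [] [] [] = True"
| "layers_near R \<delta> n (m # ms) (l # ls) (l' # ls') =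
    (near_on ({..<m} \<times> {..<n}) R \<delta> (case_prod (fst l)) (case_prod (fst l'))
      \<and> near_on {..<m} R \<delta> (snd l) (snd l') \<and> layers_near R \<delta> m ms ls ls')"
| "layers_near R \<delta> n _ _ _ = False"

lemma layers_near_Nil: "layers_near R \<delta> n [] ls ls' \<longleftrightarrow> ls = [] \<and> ls' = []"
  by (cases ls; cases ls') auto

lemma layers_near_mono:
  "layers_near R \<delta> n ms ls ls' \<Longrightarrow> R \<le> R' \<Longrightarrow> \<delta> \<le> \<delta>' \<Longrightarrow> layers_near R' \<delta>' n ms ls ls'"
  by (induction R \<delta> n ms ls ls' rule: layers_near.induct) (auto intro: near_on_mono)

lemma near_on_hidden_layer:
  assumes lip: "K-lipschitz_on {-(real n * R * R + R)..real n * R * R + R} \<rho>"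
    and A: "near_on ({..<m} \<times> {..<n}) R \<delta> (case_prod (fst l)) (case_prod (fst l'))"
    and b: "near_on {..<m} R \<delta> (snd l) (snd l')" and v: "near_on {..<n} R \<delta> v v'"
  shows "near_on {..<m} (\<bar>\<rho> 0\<bar> + K * (real n * R * R + R)) (K * ((2 * real n * R + 1) * \<delta>))
    (\<lambda>i. if i < m then \<rho> (affine_step n m l v i) else 0)
    (\<lambda>i. if i < m then \<rho> (affine_step n m l' v' i) else 0)"
proof -
  have "near_on {..<m} (real n * R * R + R) ((2 * real n * R + 1) * \<delta>)
      (\<lambda>i. (\<Sum>j<n. fst l i j * v j) + snd l i) (\<lambda>i. (\<Sum>j<n. fst l' i j * v' j) + snd l' i)"
    using near_on_affine[OF _ A b v] by simp
  from near_on_activation[OF lip this] show ?thesis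
    by (simp add: near_on_def affine_step_def)
qed

lemma layers_eval_lipschitz:
  assumes lip: "\<And>X. \<exists>K. K-lipschitz_on {-X..X} \<rho>" and "R \<ge> 0"
  shows "\<exists>K\<ge>0. \<forall>ls ls' v v' \<delta>. \<delta> \<ge> 0 \<longrightarrow> layers_near R \<delta> n ms ls ls' \<longrightarrow> near_on {..<n} R \<delta> v v' \<longrightarrow>
    (\<forall>i. \<bar>layers_eval \<rho> n ms ls v i - layers_eval \<rho> n ms ls' v' i\<bar> \<le> K * \<delta>)"
  using \<open>R \<ge> 0\<close>
proof (induction ms arbitrary: n R)
  case Nil
  show ?case
    by (intro exI[of _ 0]) (auto elim: layers_near.elims)
next
  case (Cons m ms)
  show ?case
  proof (cases ms)
    case Nil
    have "\<bar>layers_eval \<rho> n [m] [l] v i - layers_eval \<rho> n [m] [l'] v' i\<bar> \<le> (2 * real n * R + 1) * \<delta>"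
      if "\<delta> \<ge> 0" "layers_near R \<delta> n [m] [l] [l']" "near_on {..<n} R \<delta> v v'" for l l' v v' \<delta> i
    proof (cases "i < m")
      case True
      then show ?thesis
        using near_on_affine[of "{..<n}" "{..<m}" R \<delta> "fst l" "fst l'" "snd l" "snd l'" v v'] that
        by (simp add: near_on_def affine_step_def)
    qed (use that Cons.prems in \<open>simp add: affine_step_def\<close>)
    moreover have "layers_near R \<delta> n [m] ls ls' \<Longrightarrow> \<exists>l l'. ls = [l] \<and> ls' = [l']" for \<delta> ls ls'
      by (cases "(R, \<delta>, n, [m], ls, ls')" rule: layers_near.cases) (auto simp: layers_near_Nil)
    ultimately show ?thesis
      using Cons.prems Nil by (intro exI[of _ "2 * real n * R + 1"]) fastforce
  next
    case (Cons m' ms')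
    define X where "X = real n * R * R + R"
    obtain K\<^sub>\<rho> where K\<^sub>\<rho>: "K\<^sub>\<rho>-lipschitz_on {-X..X} \<rho>"
      using lip by blast
    define R' where "R' = max R (\<bar>\<rho> 0\<bar> + K\<^sub>\<rho> * X)"
    define c where "c = max 1 (K\<^sub>\<rho> * (2 * real n * R + 1))"
    have "R' \<ge> 0"
      using \<open>R \<ge> 0\<close> by (simp add: R'_def)
    then obtain K where "K \<ge> 0" and K: "\<forall>ls ls' v v' \<delta>. \<delta> \<ge> 0 \<longrightarrow> layers_near R' \<delta> m ms ls ls'
        \<longrightarrow> near_on {..<m} R' \<delta> v v'
        \<longrightarrow> (\<forall>i. \<bar>layers_eval \<rho> m ms ls v i - layers_eval \<rho> m ms ls' v' i\<bar> \<le> K * \<delta>)"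
      using Cons.IH[of R' m] by blast
    have "\<bar>layers_eval \<rho> n (m # ms) (l # ls) v i - layers_eval \<rho> n (m # ms) (l' # ls') v' i\<bar>
        \<le> K * c * \<delta>"
      if "\<delta> \<ge> 0" and near: "layers_near R \<delta> n (m # ms) (l # ls) (l' # ls')"
        and v: "near_on {..<n} R \<delta> v v'" for l ls l' ls' v v' \<delta> i
    proof -
      have "1 * \<delta> \<le> c * \<delta>" "K\<^sub>\<rho> * (2 * real n * R + 1) * \<delta> \<le> c * \<delta>"
        using \<open>\<delta> \<ge> 0\<close> unfolding c_def by (intro mult_right_mono; simp)+
      then have "c * \<delta> \<ge> \<delta>" "K\<^sub>\<rho> * ((2 * real n * R + 1) * \<delta>) \<le> c * \<delta>"
        by (simp_all add: mult.assoc)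
      then have "near_on {..<m} R' (c * \<delta>)
          (\<lambda>i. if i < m then \<rho> (affine_step n m l v i) else 0)
          (\<lambda>i. if i < m then \<rho> (affine_step n m l' v' i) else 0)"
        using near_on_hidden_layer[of K\<^sub>\<rho> n R \<rho> m \<delta> l l' v v'] K\<^sub>\<rho> near v
        by (auto simp: X_def R'_def intro: near_on_mono)
      moreover have "layers_near R' (c * \<delta>) m ms ls ls'"
        using near \<open>c * \<delta> \<ge> \<delta>\<close> by (auto simp: R'_def intro: layers_near_mono)
      ultimately show ?thesis
        using K \<open>c * \<delta> \<ge> \<delta>\<close> \<open>\<delta> \<ge> 0\<close> \<open>ms = m' # ms'\<close> by (cases ls; cases ls') (auto simp: mult.assoc)
    qed
    moreover have "layers_near R \<delta> n (m # ms) ls ls' \<Longrightarrow> \<exists>l l' ls\<^sub>1 ls\<^sub>1'. ls = l # ls\<^sub>1 \<and> ls' = l' # ls\<^sub>1'"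
      for \<delta> ls ls'
      by (cases "(R, \<delta>, n, m # ms, ls, ls')" rule: layers_near.cases) auto
    ultimately show ?thesis
      using \<open>K \<ge> 0\<close> by (intro exI[of _ "K * c"]) (fastforce simp: c_def)
  qed
qed

datatype 'd param = First_weight nat 'd | First_bias nat | Weight nat nat nat | Bias nat nat

definition params :: "nat list \<Rightarrow> 'd param set" where
  "params Ns = (\<lambda>(j, a). First_weight j a) ` ({..<hd Ns} \<times> UNIV) \<union> First_bias ` {..<hd Ns}
    \<union> (\<lambda>(l, i, j). Weight l i j) ` (SIGMA l:{..<length Ns - 1}. {..<Ns ! Suc l} \<times> {..<Ns ! l})
    \<union> (\<lambda>(l, i). Bias l i) ` (SIGMA l:{..<length Ns - 1}. {..<Ns ! Suc l})"

lemma finite_params: "finite (params Ns :: 'd::finite param set)"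
  by (simp add: params_def)

lemma params_memI:
  "j < hd Ns \<Longrightarrow> First_weight j a \<in> params Ns"
  "j < hd Ns \<Longrightarrow> First_bias j \<in> params Ns"
  "l < length Ns - 1 \<Longrightarrow> i < Ns ! Suc l \<Longrightarrow> j < Ns ! l \<Longrightarrow> Weight l i j \<in> params Ns"
  "l < length Ns - 1 \<Longrightarrow> i < Ns ! Suc l \<Longrightarrow> Bias l i \<in> params Ns"
  unfolding params_def
  by (auto intro: image_eqI[where x = "(j, a)"] image_eqI[where x = "(l, i, j)"] image_eqI[where x = "(l, i)"])

definition network_of :: "nat list \<Rightarrow> ('d param \<Rightarrow> real) \<Rightarrow> 'd::finite network" where
  "network_of Ns \<phi> = (\<lambda>j. \<chi> a. \<phi> (First_weight j a), \<lambda>j. \<phi> (First_bias j),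
     map (\<lambda>l. (\<lambda>i j. \<phi> (Weight l i j), \<lambda>i. \<phi> (Bias l i))) [0..<length Ns - 1])"

definition params_of :: "'d::finite network \<Rightarrow> 'd param \<Rightarrow> real" where
  "params_of \<theta> \<iota> = (case \<iota> of
      First_weight j a \<Rightarrow> fst \<theta> j $ a
    | First_bias j \<Rightarrow> fst (snd \<theta>) j
    | Weight l i j \<Rightarrow> fst (snd (snd \<theta>) ! l) i j
    | Bias l i \<Rightarrow> snd (snd (snd \<theta>) ! l) i)"

lemma network_of_params_of: "is_network Ns \<theta> \<Longrightarrow> network_of Ns (params_of \<theta>) = \<theta>"
proof -
  assume "is_network Ns \<theta>"
  obtain W b ls where \<theta>: "\<theta> = (W, b, ls)"
    by (cases \<theta>)
  have "length ls = length Ns - 1"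
    using \<open>is_network Ns \<theta>\<close> \<theta> by (simp add: is_network_def)
  moreover have "map (\<lambda>l. (\<lambda>i j. fst (ls ! l) i j, \<lambda>i. snd (ls ! l) i)) [0..<length ls] = ls"
    by (rule nth_equalityI) auto
  ultimately show ?thesis
    unfolding \<theta> network_of_def params_of_def by (simp add: vec_lambda_eta)
qed

lemma layers_near_map:
  assumes "\<And>l. l < length ms \<Longrightarrow>
      near_on ({..<ms ! l} \<times> {..<(n # ms) ! l}) R \<delta> (case_prod (A l)) (case_prod (A' l))
      \<and> near_on {..<ms ! l} R \<delta> (B l) (B' l)"
  shows "layers_near R \<delta> n ms (map (\<lambda>l. (A l, B l)) [0..<length ms])
    (map (\<lambda>l. (A' l, B' l)) [0..<length ms])"
  using assms
proof (induction ms arbitrary: n A B A' B')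
  case (Cons m ms)
  have "layers_near R \<delta> m ms (map (\<lambda>l. (A (Suc l), B (Suc l))) [0..<length ms])
      (map (\<lambda>l. (A' (Suc l), B' (Suc l))) [0..<length ms])"
    using Cons.prems[of "Suc _"] by (intro Cons.IH) simp
  then show ?case
    using Cons.prems[of 0] by (simp add: map_upt_Suc del: upt_Suc)
qed simp

lemma layers_near_network_of:
  assumes "near_on (params (N\<^sub>1 # ms)) R \<delta> \<phi> \<psi>"
  shows "layers_near R \<delta> N\<^sub>1 ms (snd (snd (network_of (N\<^sub>1 # ms) \<phi>)))
    (snd (snd (network_of (N\<^sub>1 # ms) \<psi>)))"
  unfolding network_of_def snd_conv length_Cons diff_Suc_1
proof (rule layers_near_map)
  fix l assume "l < length ms"
  have near: "\<bar>\<phi> \<iota>\<bar> \<le> R \<and> \<bar>\<psi> \<iota>\<bar> \<le> R \<and> \<bar>\<phi> \<iota> - \<psi> \<iota>\<bar> \<le> \<delta>" if "\<iota> \<in> params (N\<^sub>1 # ms)" for \<iota>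
    using assms that by (simp add: near_on_def)
  have "\<bar>\<phi> (Weight l i j)\<bar> \<le> R \<and> \<bar>\<psi> (Weight l i j)\<bar> \<le> R \<and> \<bar>\<phi> (Weight l i j) - \<psi> (Weight l i j)\<bar> \<le> \<delta>"
    if "i < ms ! l" "j < (N\<^sub>1 # ms) ! l" for i j
    using that \<open>l < length ms\<close> by (intro near params_memI) simp_all
  moreover have "\<bar>\<phi> (Bias l i)\<bar> \<le> R \<and> \<bar>\<psi> (Bias l i)\<bar> \<le> R \<and> \<bar>\<phi> (Bias l i) - \<psi> (Bias l i)\<bar> \<le> \<delta>"
    if "i < ms ! l" for i
    using that \<open>l < length ms\<close> by (intro near params_memI) simp_all
  ultimately show "near_on ({..<ms ! l} \<times> {..<(N\<^sub>1 # ms) ! l}) R \<delta>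
        (\<lambda>(i, j). \<phi> (Weight l i j)) (\<lambda>(i, j). \<psi> (Weight l i j))
      \<and> near_on {..<ms ! l} R \<delta> (\<lambda>i. \<phi> (Bias l i)) (\<lambda>i. \<psi> (Bias l i))"
    by (auto simp: near_on_def)
qed

lemma inner_vec_lambda: "(\<chi> a. w a) \<bullet> x = (\<Sum>a\<in>UNIV. w a * x $ a)"
  by (simp add: inner_vec_def)

lemma near_on_image:
  "near_on A R \<delta> u v \<Longrightarrow> (\<And>b. b \<in> B \<Longrightarrow> f b \<in> A) \<Longrightarrow> near_on B R \<delta> (\<lambda>b. u (f b)) (\<lambda>b. v (f b))"
  unfolding near_on_def by blast

lemma realization_lipschitz_params:
  fixes x :: "real ^ 'd::finite"
  assumes lip: "\<And>X. \<exists>K. K-lipschitz_on {-X..X} \<rho>" and "length Ns \<ge> 2" and "R \<ge> 0"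
  shows "\<exists>K\<ge>0. \<forall>\<phi> \<psi> \<delta>. \<delta> \<ge> 0 \<longrightarrow> near_on (params Ns) R \<delta> \<phi> \<psi> \<longrightarrow>
    \<bar>realization \<rho> \<Omega> Ns (network_of Ns \<phi>) x i - realization \<rho> \<Omega> Ns (network_of Ns \<psi>) x i\<bar> \<le> K * \<delta>"
proof -
  obtain N\<^sub>1 ms where Ns: "Ns = N\<^sub>1 # ms"
    using assms(2) by (cases Ns) auto
  define S where "S = R + (\<Sum>a\<in>UNIV. \<bar>x $ a\<bar>)"
  have "R \<le> S" and x_S: "\<bar>x $ a\<bar> \<le> S" for a
    using member_le_sum[of a UNIV "\<lambda>a. \<bar>x $ a\<bar>"] \<open>R \<ge> 0\<close> by (auto simp: S_def sum_nonneg)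
  define X where "X = real CARD('d) * S * S + S"
  obtain K\<^sub>\<rho> where K\<^sub>\<rho>: "K\<^sub>\<rho>-lipschitz_on {-X..X} \<rho>"
    using lip by blast
  define R' where "R' = max S (\<bar>\<rho> 0\<bar> + K\<^sub>\<rho> * X)"
  define c where "c = max 1 (K\<^sub>\<rho> * (2 * real CARD('d) * S + 1))"
  have "c \<ge> 1"
    by (simp add: c_def)
  have "R' \<ge> 0"
    using \<open>R \<le> S\<close> \<open>R \<ge> 0\<close> by (simp add: R'_def)
  then obtain K where "K \<ge> 0" and K: "\<forall>ls ls' v v' \<delta>. \<delta> \<ge> 0 \<longrightarrow> layers_near R' \<delta> N\<^sub>1 ms ls ls'
      \<longrightarrow> near_on {..<N\<^sub>1} R' \<delta> v v'
      \<longrightarrow> (\<forall>i. \<bar>layers_eval \<rho> N\<^sub>1 ms ls v i - layers_eval \<rho> N\<^sub>1 ms ls' v' i\<bar> \<le> K * \<delta>)"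
    using layers_eval_lipschitz[OF lip] by blast
  have "\<bar>realization \<rho> \<Omega> Ns (network_of Ns \<phi>) x i - realization \<rho> \<Omega> Ns (network_of Ns \<psi>) x i\<bar>
      \<le> K * c * \<delta>" if "\<delta> \<ge> 0" and near: "near_on (params Ns) R \<delta> \<phi> \<psi>" for \<phi> \<psi> \<delta>
  proof (cases "x \<in> \<Omega>")
    case True
    have "1 * \<delta> \<le> c * \<delta>" "K\<^sub>\<rho> * (2 * real CARD('d) * S + 1) * \<delta> \<le> c * \<delta>"
      using \<open>\<delta> \<ge> 0\<close> unfolding c_def by (intro mult_right_mono; simp)+
    then have "\<delta> \<le> c * \<delta>" "K\<^sub>\<rho> * ((2 * real CARD('d) * S + 1) * \<delta>) \<le> c * \<delta>"
      by (simp_all add: mult.assoc)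
    have near_S: "near_on (params Ns) S \<delta> \<phi> \<psi>"
      using near \<open>R \<le> S\<close> by (rule near_on_mono) simp
    have "near_on ({..<N\<^sub>1} \<times> UNIV) S \<delta>
        (\<lambda>p. \<phi> (First_weight (fst p) (snd p))) (\<lambda>p. \<psi> (First_weight (fst p) (snd p)))"
      "near_on {..<N\<^sub>1} S \<delta> (\<lambda>j. \<phi> (First_bias j)) (\<lambda>j. \<psi> (First_bias j))"
      by (rule near_on_image[OF near_S]; auto simp: Ns intro: params_memI)+
    moreover have "near_on UNIV S \<delta> (\<lambda>a. x $ a) (\<lambda>a. x $ a)"
      using x_S \<open>\<delta> \<ge> 0\<close> by (simp add: near_on_def)
    ultimately have "near_on {..<N\<^sub>1} X ((2 * real CARD('d) * S + 1) * \<delta>)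
        (\<lambda>j. (\<chi> a. \<phi> (First_weight j a)) \<bullet> x + \<phi> (First_bias j))
        (\<lambda>j. (\<chi> a. \<psi> (First_weight j a)) \<bullet> x + \<psi> (First_bias j))"
      using near_on_affine[of "UNIV :: 'd set" "{..<N\<^sub>1}" S \<delta> "\<lambda>j a. \<phi> (First_weight j a)"
          "\<lambda>j a. \<psi> (First_weight j a)"]
      by (simp add: inner_vec_lambda X_def case_prod_beta')
    from near_on_activation[OF K\<^sub>\<rho> this]
    have "near_on {..<N\<^sub>1} R' (c * \<delta>)
        (\<lambda>j. \<rho> ((\<chi> a. \<phi> (First_weight j a)) \<bullet> x + \<phi> (First_bias j)))
        (\<lambda>j. \<rho> ((\<chi> a. \<psi> (First_weight j a)) \<bullet> x + \<psi> (First_bias j)))"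
      by (rule near_on_mono) (use \<open>K\<^sub>\<rho> * ((2 * real CARD('d) * S + 1) * \<delta>) \<le> c * \<delta>\<close> in \<open>simp_all add: R'_def\<close>)
    then have "near_on {..<N\<^sub>1} R' (c * \<delta>)
        (\<lambda>j. if j < N\<^sub>1 then \<rho> ((\<chi> a. \<phi> (First_weight j a)) \<bullet> x + \<phi> (First_bias j)) else 0)
        (\<lambda>j. if j < N\<^sub>1 then \<rho> ((\<chi> a. \<psi> (First_weight j a)) \<bullet> x + \<psi> (First_bias j)) else 0)"
      by (simp add: near_on_def)
    moreover have "layers_near R' (c * \<delta>) N\<^sub>1 ms (snd (snd (network_of Ns \<phi>))) (snd (snd (network_of Ns \<psi>)))"
      using layers_near_network_of[of N\<^sub>1 ms R \<delta> \<phi> \<psi>] near \<open>\<delta> \<le> c * \<delta>\<close> \<open>R \<le> S\<close>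
      by (auto simp: Ns R'_def intro: layers_near_mono)
    ultimately show ?thesis
      using K \<open>\<delta> \<le> c * \<delta>\<close> \<open>\<delta> \<ge> 0\<close> True
      by (auto simp: realization_def network_of_def Ns mult.assoc)
  qed (use \<open>K \<ge> 0\<close> \<open>\<delta> \<ge> 0\<close> \<open>c \<ge> 1\<close> in \<open>simp add: realization_def\<close>)
  then show ?thesis
    using \<open>K \<ge> 0\<close> \<open>c \<ge> 1\<close> by (intro exI[of _ "K * c"]) auto
qed

section \<open>Lipschitz images of lower-dimensional cubes are null\<close>

lemma emeasure_PiM_cube:
  assumes "e \<ge> 0"
  shows "emeasure (PiM {..<n} (\<lambda>_. lborel)) (PiE {..<n} (\<lambda>i. {c i - e..c i + e})) = ennreal ((2 * e) ^ n)"
proof -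
  interpret product_sigma_finite "\<lambda>_::nat. lborel :: real measure"
    by standard
  have "emeasure (PiM {..<n} (\<lambda>_. lborel)) (PiE {..<n} (\<lambda>i. {c i - e..c i + e}))
      = (\<Prod>i<n. emeasure lborel {c i - e..c i + e})"
    by (rule emeasure_PiM) auto
  also have "\<dots> = ennreal (2 * e) ^ n"
    using assms by simp
  finally show ?thesis
    using assms by (simp add: ennreal_power)
qed

definition grid_points :: "nat \<Rightarrow> nat \<Rightarrow> real set" where
  "grid_points r k = (\<lambda>z. of_int z / real k) ` {- int ((r + 1) * k)..int ((r + 1) * k)}"

lemma card_grid_points: "card (grid_points r k) \<le> 2 * (r + 1) * k + 1"
proof -
  have "card (grid_points r k) \<le> card {- int ((r + 1) * k)..int ((r + 1) * k)}"
    unfolding grid_points_def by (rule card_image_le) simp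
  also have "\<dots> = 2 * (r + 1) * k + 1"
  proof -
    have "int ((r + 1) * k) - - int ((r + 1) * k) + 1 = int (2 * (r + 1) * k + 1)"
      by simp
    then show ?thesis
      by (simp only: card_atLeastAtMost_int nat_int)
  qed
  finally show ?thesis .
qed

lemma grid_approximation:
  fixes \<phi> :: "'i \<Rightarrow> real"
  assumes "k \<ge> 1" and bound: "\<And>\<iota>. \<iota> \<in> I \<Longrightarrow> \<bar>\<phi> \<iota>\<bar> \<le> real r"
  obtains t where "t \<in> PiE I (\<lambda>_. grid_points r k)" and "near_on I (real r + 1) (1 / real k) t \<phi>"
proof
  define t where "t = restrict (\<lambda>\<iota>. of_int \<lfloor>real k * \<phi> \<iota>\<rfloor> / real k) I"
  have approx: "t \<iota> \<in> grid_points r k \<and> \<bar>t \<iota>\<bar> \<le> real r + 1 \<and> \<bar>t \<iota> - \<phi> \<iota>\<bar> \<le> 1 / real k"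
    if "\<iota> \<in> I" for \<iota>
  proof -
    define z where "z = \<lfloor>real k * \<phi> \<iota>\<rfloor>"
    have k: "real k \<ge> 1"
      using assms(1) by simp
    have "- real r \<le> \<phi> \<iota>" "\<phi> \<iota> \<le> real r"
      using bound[OF that] by (auto simp: abs_le_iff)
    then have "real k * \<phi> \<iota> \<le> real k * real r" "real k * (- real r) \<le> real k * \<phi> \<iota>"
      by (intro mult_left_mono; simp)+
    moreover have "of_int z \<le> real k * \<phi> \<iota>" "real k * \<phi> \<iota> < of_int z + 1"
      unfolding z_def by linarith+
    ultimately have z_bound: "\<bar>of_int z\<bar> \<le> real k * real r + real k"
      using k unfolding abs_le_iff by linarith
    have "real_of_int (int ((r + 1) * k)) = real k * real r + real k"
      by (simp add: algebra_simps)
    then have "of_int z \<le> real_of_int (int ((r + 1) * k))" "real_of_int (- int ((r + 1) * k)) \<le> of_int z"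
      using z_bound unfolding abs_le_iff by linarith+
    then have "z \<in> {- int ((r + 1) * k)..int ((r + 1) * k)}"
      unfolding of_int_le_iff by simp
    moreover have t: "t \<iota> = of_int z / real k"
      using that by (simp add: t_def z_def)
    ultimately have "t \<iota> \<in> grid_points r k"
      by (auto simp: grid_points_def)
    moreover have "\<bar>t \<iota>\<bar> \<le> real r + 1"
      using z_bound k by (simp add: t abs_divide divide_le_eq algebra_simps)
    moreover have "\<bar>t \<iota> - \<phi> \<iota>\<bar> \<le> 1 / real k"
    proof -
      have "t \<iota> - \<phi> \<iota> = (of_int z - real k * \<phi> \<iota>) / real k"
        using k by (simp add: t field_simps)
      moreover have "\<bar>of_int z - real k * \<phi> \<iota>\<bar> \<le> 1"
        using \<open>of_int z \<le> real k * \<phi> \<iota>\<close> \<open>real k * \<phi> \<iota> < of_int z + 1\<close> by linarith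
      ultimately show ?thesis
        using k by (simp add: abs_divide divide_right_mono)
    qed
    ultimately show ?thesis
      by blast
  qed
  show "t \<in> PiE I (\<lambda>_. grid_points r k)"
    using approx by (auto simp: t_def PiE_iff)
  show "near_on I (real r + 1) (1 / real k) t \<phi>"
    using approx bound by (fastforce simp: near_on_def)
qed

lemma grid_count_bound:
  fixes k r P :: nat and K :: real
  assumes "k \<ge> 1" and "K \<ge> 0"
  shows "real (2 * (r + 1) * k + 1) ^ P * (2 * (K / real k)) ^ Suc P
    \<le> (3 * (real r + 1)) ^ P * (2 * K) ^ Suc P / real k"
proof -
  have "1 * 1 \<le> (real r + 1) * real k"
    using assms(1) by (intro mult_mono) auto
  then have "real (2 * (r + 1) * k + 1) \<le> 3 * (real r + 1) * real k"
    by (simp add: algebra_simps)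
  then have "real (2 * (r + 1) * k + 1) ^ P * (2 * (K / real k)) ^ Suc P
      \<le> (3 * (real r + 1) * real k) ^ P * (2 * (K / real k)) ^ Suc P"
    using assms by (intro mult_right_mono power_mono) auto
  also have "\<dots> = (3 * (real r + 1)) ^ P * (2 * K) ^ Suc P * (real k ^ P / real k ^ Suc P)"
    by (simp add: power_mult_distrib power_divide)
  also have "\<dots> = (3 * (real r + 1)) ^ P * (2 * K) ^ Suc P / real k"
    using assms(1) by simp
  finally show ?thesis .
qed

lemma emeasure_grid_cover_le:
  fixes E :: "('i \<Rightarrow> real) \<Rightarrow> nat \<Rightarrow> real"
  assumes "finite I" and "k \<ge> 1" and "K \<ge> 0"
  defines "n \<equiv> Suc (card I)"
  shows "emeasure (PiM {..<n} (\<lambda>_. lborel))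
      (\<Union>t\<in>PiE I (\<lambda>_. grid_points r k). PiE {..<n} (\<lambda>i. {E t i - K / real k..E t i + K / real k}))
    \<le> ennreal ((3 * (real r + 1)) ^ card I * (2 * K) ^ n / real k)"
proof -
  let ?grid = "PiE I (\<lambda>_. grid_points r k)" and ?\<mu> = "PiM {..<n} (\<lambda>_. lborel :: real measure)"
  have "finite ?grid"
    using assms(1) by (simp add: finite_PiE grid_points_def)
  have "card ?grid \<le> (2 * (r + 1) * k + 1) ^ card I"
    using assms(1) card_grid_points by (simp add: card_PiE power_mono)
  have "emeasure ?\<mu> (\<Union>t\<in>?grid. PiE {..<n} (\<lambda>i. {E t i - K / real k..E t i + K / real k}))
      \<le> (\<Sum>t\<in>?grid. emeasure ?\<mu> (PiE {..<n} (\<lambda>i. {E t i - K / real k..E t i + K / real k})))"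
    by (rule emeasure_subadditive_finite[OF \<open>finite ?grid\<close>]) (auto intro: sets_PiM_I_finite)
  also have "\<dots> = of_nat (card ?grid) * ennreal ((2 * (K / real k)) ^ n)"
    using assms(3) by (simp add: emeasure_PiM_cube)
  also have "\<dots> = ennreal (real (card ?grid) * (2 * (K / real k)) ^ n)"
    using assms(3) by (simp add: ennreal_of_nat_eq_real_of_nat ennreal_mult)
  also have "\<dots> \<le> ennreal ((3 * (real r + 1)) ^ card I * (2 * K) ^ n / real k)"
  proof (rule ennreal_leI)
    have "real (card ?grid) \<le> real (2 * (r + 1) * k + 1) ^ card I"
      using \<open>card ?grid \<le> _\<close> by (metis of_nat_le_iff of_nat_power)
    then have "real (card ?grid) * (2 * (K / real k)) ^ n
        \<le> real (2 * (r + 1) * k + 1) ^ card I * (2 * (K / real k)) ^ n"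
      using assms(3) by (intro mult_right_mono) auto
    also have "\<dots> \<le> (3 * (real r + 1)) ^ card I * (2 * K) ^ n / real k"
      unfolding n_def using assms(2,3) by (rule grid_count_bound)
    finally show "real (card ?grid) * (2 * (K / real k)) ^ n
        \<le> (3 * (real r + 1)) ^ card I * (2 * K) ^ n / real k" .
  qed
  finally show ?thesis .
qed

lemma emeasure_Inter_grid_covers:
  fixes E :: "('i \<Rightarrow> real) \<Rightarrow> nat \<Rightarrow> real"
  assumes "finite I" and "K \<ge> 0"
  defines "n \<equiv> Suc (card I)"
  shows "emeasure (PiM {..<n} (\<lambda>_. lborel)) (\<Inter>k. \<Union>t\<in>PiE I (\<lambda>_. grid_points r (Suc k)).
      PiE {..<n} (\<lambda>i. {E t i - K / real (Suc k)..E t i + K / real (Suc k)})) = 0"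
proof -
  let ?\<mu> = "PiM {..<n} (\<lambda>_. lborel :: real measure)"
  let ?cover = "\<lambda>k. \<Union>t\<in>PiE I (\<lambda>_. grid_points r k). PiE {..<n} (\<lambda>i. {E t i - K / real k..E t i + K / real k})"
  define C where "C = (3 * (real r + 1)) ^ card I * (2 * K) ^ n"
  have small: "emeasure ?\<mu> (\<Inter>k. ?cover (Suc k)) \<le> ennreal e" if "e > 0" for e
  proof -
    define k where "k = Suc (nat \<lceil>C / e\<rceil>)"
    have "k \<ge> 1"
      by (simp add: k_def)
    have "C / e \<le> real k"
      unfolding k_def by linarith
    then have "C / real k \<le> e"
      using \<open>e > 0\<close> by (simp add: k_def field_simps)
    have "?cover k \<in> sets ?\<mu>"
      using \<open>finite I\<close> by (intro sets.finite_UN) (auto simp: finite_PiE grid_points_def intro: sets_PiM_I_finite)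
    then have "emeasure ?\<mu> (\<Inter>k. ?cover (Suc k)) \<le> emeasure ?\<mu> (?cover k)"
      unfolding k_def by (rule emeasure_mono[rotated]) blast
    also have "\<dots> \<le> ennreal (C / real k)"
      unfolding C_def n_def using emeasure_grid_cover_le[OF \<open>finite I\<close> \<open>k \<ge> 1\<close> \<open>K \<ge> 0\<close>, of E r] .
    also have "\<dots> \<le> ennreal e"
      using \<open>C / real k \<le> e\<close> by (rule ennreal_leI)
    finally show ?thesis .
  qed
  have "emeasure ?\<mu> (\<Inter>k. ?cover (Suc k)) \<le> 0"
    by (rule ennreal_le_epsilon) (simp only: add_0 small)
  then show ?thesis
    by (simp only: le_zero_eq n_def)
qed

lemma restrict_mem_grid_cover:
  assumes "k \<ge> 1" and "\<And>\<iota>. \<iota> \<in> I \<Longrightarrow> \<bar>\<phi> \<iota>\<bar> \<le> real r"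
    and lip: "\<And>\<psi> i. near_on I (real r + 1) (1 / real k) \<psi> \<phi> \<Longrightarrow> i < n \<Longrightarrow>
      \<bar>E \<psi> i - E \<phi> i\<bar> \<le> K * (1 / real k)"
  shows "restrict (E \<phi>) {..<n}
    \<in> (\<Union>t\<in>PiE I (\<lambda>_. grid_points r k). PiE {..<n} (\<lambda>i. {E t i - K / real k..E t i + K / real k}))"
proof -
  obtain t where t: "t \<in> PiE I (\<lambda>_. grid_points r k)" and "near_on I (real r + 1) (1 / real k) t \<phi>"
    by (rule grid_approximation[OF assms(1,2)])
  then have bound: "\<bar>E t i - E \<phi> i\<bar> \<le> K / real k" if "i < n" for i
    using lip[OF _ that] by simp
  have "restrict (E \<phi>) {..<n} \<in> PiE {..<n} (\<lambda>i. {E t i - K / real k..E t i + K / real k})"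
  proof (rule PiE_I)
    fix i assume "i \<in> {..<n}"
    then show "restrict (E \<phi>) {..<n} i \<in> {E t i - K / real k..E t i + K / real k}"
      using bound[of i] by (simp add: abs_le_iff)
  qed simp
  then show ?thesis
    by (rule UN_I[OF t])
qed

text \<open>Cover the image of the parameter cube \<open>[-r, r]\<^sup>P\<close> by the \<open>(2(r+1)k + 1)\<^sup>P\<close> cubes
  of side \<open>2 K\<^sub>r / k\<close> around the images of grid points: their total volume is \<open>O(1/k)\<close> in
  dimension \<open>P + 1\<close>. Hence the image of the parameter space is a countable union of null
  sets and cannot contain the unit cube.\<close>

lemma lipschitz_map_misses_point:
  fixes E :: "('i \<Rightarrow> real) \<Rightarrow> nat \<Rightarrow> real"
  assumes "finite I"
    and lip: "\<And>R. R \<ge> 0 \<Longrightarrow> \<exists>K. \<forall>\<phi> \<psi> \<delta>. \<delta> \<ge> 0 \<longrightarrow> near_on I R \<delta> \<phi> \<psi> \<longrightarrow>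
      (\<forall>k\<le>card I. \<bar>E \<phi> k - E \<psi> k\<bar> \<le> K * \<delta>)"
  shows "\<exists>y. \<forall>\<phi>. \<exists>k\<le>card I. E \<phi> k \<noteq> y k"
proof (rule ccontr)
  assume "\<nexists>y. \<forall>\<phi>. \<exists>k\<le>card I. E \<phi> k \<noteq> y k"
  then have onto: "\<exists>\<phi>. \<forall>k\<le>card I. E \<phi> k = y k" for y
    by blast
  define n where "n = Suc (card I)"
  define \<mu> where "\<mu> = PiM {..<n} (\<lambda>_. lborel :: real measure)"
  have "\<forall>r :: nat. \<exists>K. \<forall>\<phi> \<psi> \<delta>. \<delta> \<ge> 0 \<longrightarrow> near_on I (real r + 1) \<delta> \<phi> \<psi> \<longrightarrow>
      (\<forall>k\<le>card I. \<bar>E \<phi> k - E \<psi> k\<bar> \<le> K * \<delta>)"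
    using lip by (simp add: add_nonneg_nonneg)
  from choice[OF this] obtain K\<^sub>0 where K\<^sub>0: "\<forall>r :: nat. \<forall>\<phi> \<psi> \<delta>. \<delta> \<ge> 0 \<longrightarrow>
      near_on I (real r + 1) \<delta> \<phi> \<psi> \<longrightarrow> (\<forall>k\<le>card I. \<bar>E \<phi> k - E \<psi> k\<bar> \<le> K\<^sub>0 r * \<delta>)"
    by blast
  define K where "K r = max 0 (K\<^sub>0 r)" for r
  have "K r \<ge> 0" for r
    by (simp add: K_def)
  have lip_K: "\<bar>E \<phi> k - E \<psi> k\<bar> \<le> K r * \<delta>"
    if "\<delta> \<ge> 0" "near_on I (real r + 1) \<delta> \<phi> \<psi>" "k < n" for \<phi> \<psi> \<delta> k r
  proof -
    have "\<bar>E \<phi> k - E \<psi> k\<bar> \<le> K\<^sub>0 r * \<delta>"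
      using K\<^sub>0[rule_format, OF that(1,2), of k] that(3) by (simp add: n_def)
    also have "\<dots> \<le> K r * \<delta>"
      using that(1) by (intro mult_right_mono) (simp_all add: K_def)
    finally show ?thesis .
  qed
  define cover where "cover r k = (\<Union>t\<in>PiE I (\<lambda>_. grid_points r k).
      PiE {..<n} (\<lambda>i. {E t i - K r / real k..E t i + K r / real k}))" for r k
  have cover_sets: "cover r k \<in> sets \<mu>" for r k
    unfolding cover_def \<mu>_def using \<open>finite I\<close>
    by (intro sets.finite_UN) (auto simp: finite_PiE grid_points_def intro: sets_PiM_I_finite)
  have null: "emeasure \<mu> (\<Inter>k. cover r (Suc k)) = 0" for r
    unfolding \<mu>_def cover_def n_def using emeasure_Inter_grid_covers[OF \<open>finite I\<close> \<open>K r \<ge> 0\<close>, of E r] .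
  have "PiE {..<n} (\<lambda>_. {0..1}) \<subseteq> (\<Union>r. \<Inter>k. cover r (Suc k))"
  proof
    fix y assume "y \<in> PiE {..<n} (\<lambda>_. {0..1::real})"
    obtain \<phi> where \<phi>: "\<forall>k\<le>card I. E \<phi> k = y k"
      using onto by blast
    with \<open>y \<in> _\<close> have y: "y = restrict (E \<phi>) {..<n}"
      by (auto simp: PiE_iff n_def extensional_def)
    define r where "r = nat \<lceil>\<Sum>\<iota>\<in>I. \<bar>\<phi> \<iota>\<bar>\<rceil>"
    have \<phi>_r: "\<bar>\<phi> \<iota>\<bar> \<le> real r" if "\<iota> \<in> I" for \<iota>
      using member_le_sum[of \<iota> I "\<lambda>\<iota>. \<bar>\<phi> \<iota>\<bar>"] that \<open>finite I\<close> unfolding r_def by linarith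
    have "y \<in> cover r (Suc k)" for k
      unfolding y cover_def
    proof (rule restrict_mem_grid_cover[OF _ \<phi>_r])
      fix \<psi> i
      assume "near_on I (real r + 1) (1 / real (Suc k)) \<psi> \<phi>" and "i < n"
      then show "\<bar>E \<psi> i - E \<phi> i\<bar> \<le> K r * (1 / real (Suc k))"
        by (rule lip_K[rotated]) simp
    qed simp
    then show "y \<in> (\<Union>r. \<Inter>k. cover r (Suc k))"
      by blast
  qed
  then have "emeasure \<mu> (PiE {..<n} (\<lambda>_. {0..1})) \<le> emeasure \<mu> (\<Union>r. \<Inter>k. cover r (Suc k))"
    by (rule emeasure_mono) (auto intro: cover_sets)
  also have "\<dots> = 0"
    using null cover_sets by (intro emeasure_UN_eq_0) auto
  finally show False
    using emeasure_PiM_cube[of "1 / 2" n "\<lambda>_. 1 / 2"] by (simp add: \<mu>_def)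
qed

lemma lipschitz_sum_bound:
  fixes P :: nat
  assumes "\<And>k. k \<le> P \<Longrightarrow> \<exists>K\<ge>0. \<forall>\<phi> \<psi> \<delta>. \<delta> \<ge> 0 \<longrightarrow> near_on I R \<delta> \<phi> \<psi> \<longrightarrow> \<bar>E \<phi> k - E \<psi> k\<bar> \<le> K * \<delta>"
  shows "\<exists>K. \<forall>\<phi> \<psi> \<delta>. \<delta> \<ge> 0 \<longrightarrow> near_on I R \<delta> \<phi> \<psi> \<longrightarrow> (\<forall>k\<le>P. \<bar>E \<phi> k - E \<psi> k\<bar> \<le> K * \<delta>)"
proof -
  have "\<forall>k. \<exists>K. k \<le> P \<longrightarrow> K \<ge> 0 \<and> (\<forall>\<phi> \<psi> \<delta>. \<delta> \<ge> 0 \<longrightarrow> near_on I R \<delta> \<phi> \<psi> \<longrightarrow>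
      \<bar>E \<phi> k - E \<psi> k\<bar> \<le> K * \<delta>)"
    using assms by blast
  from choice[OF this] obtain K where K: "\<And>k. k \<le> P \<Longrightarrow> K k \<ge> 0 \<and> (\<forall>\<phi> \<psi> \<delta>. \<delta> \<ge> 0 \<longrightarrow>
      near_on I R \<delta> \<phi> \<psi> \<longrightarrow> \<bar>E \<phi> k - E \<psi> k\<bar> \<le> K k * \<delta>)"
    by blast
  have "\<bar>E \<phi> k - E \<psi> k\<bar> \<le> (\<Sum>j\<le>P. K j) * \<delta>"
    if "\<delta> \<ge> 0" "near_on I R \<delta> \<phi> \<psi>" "k \<le> P" for \<phi> \<psi> \<delta> k
  proof -
    have "K k \<le> (\<Sum>j\<le>P. K j)"
      using K that(3) by (intro member_le_sum) auto
    then have "K k * \<delta> \<le> (\<Sum>j\<le>P. K j) * \<delta>"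
      using that(1) by (rule mult_right_mono)
    moreover have "\<bar>E \<phi> k - E \<psi> k\<bar> \<le> K k * \<delta>"
      using K that by blast
    ultimately show ?thesis
      by linarith
  qed
  then show ?thesis
    by blast
qed

text \<open>The parameters-to-samples map of a network is Lipschitz on bounded sets, so its
  image misses a point once there are more samples than parameters.\<close>

lemma network_samples_not_onto:
  fixes \<Omega> :: "(real ^ 'd::finite) set" and xs :: "nat \<Rightarrow> real ^ 'd"
  assumes lip: "\<And>X. \<exists>K. K-lipschitz_on {-X..X} \<rho>" and "length Ns \<ge> 2"
  obtains y where "\<And>\<theta>. is_network Ns \<theta> \<Longrightarrow>
    \<exists>k\<le>card (params Ns :: 'd param set). realization \<rho> \<Omega> Ns \<theta> (xs k) 0 \<noteq> y k"
proof -
  define E where "E \<phi> k = realization \<rho> \<Omega> Ns (network_of Ns \<phi>) (xs k) 0" for \<phi> :: "'d param \<Rightarrow> real" and k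
  have "\<exists>K. \<forall>\<phi> \<psi> \<delta>. \<delta> \<ge> 0 \<longrightarrow> near_on (params Ns) R \<delta> \<phi> \<psi> \<longrightarrow>
      (\<forall>k\<le>card (params Ns :: 'd param set). \<bar>E \<phi> k - E \<psi> k\<bar> \<le> K * \<delta>)"
    if "R \<ge> 0" for R
    unfolding E_def using realization_lipschitz_params[OF lip assms(2) that]
    by (intro lipschitz_sum_bound) blast
  from lipschitz_map_misses_point[OF finite_params this]
  obtain y where y: "\<And>\<phi>. \<exists>k\<le>card (params Ns :: 'd param set). E \<phi> k \<noteq> y k"
    by blast
  show ?thesis
  proof (rule that)
    fix \<theta> :: "'d network"
    assume "is_network Ns \<theta>"
    then show "\<exists>k\<le>card (params Ns :: 'd param set). realization \<rho> \<Omega> Ns \<theta> (xs k) 0 \<noteq> y k"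
      using y[of "params_of \<theta>"] by (simp add: E_def network_of_params_of)
  qed
qed

lemma convex_RNN_shift_relation:
  fixes \<rho> :: "real \<Rightarrow> real" and \<Omega> :: "(real ^ 'd::finite) set"
  assumes L: "length Ns \<ge> 2" and pos: "\<forall>N\<in>set Ns. N \<ge> 1" and "interior \<Omega> \<noteq> {}"
    and cont: "continuous_on UNIV \<rho>" and lip: "\<And>X. \<exists>K. K-lipschitz_on {-X..X} \<rho>"
    and convex: "fun_set_convex (RNN \<rho> \<Omega> Ns)" and "\<rho> p \<noteq> \<rho> q"
  obtains n k\<^sub>0 c where "k\<^sub>0 < n" and "c k\<^sub>0 \<noteq> 0"
    and "\<And>\<beta> h. (\<Sum>k<n. c k * \<rho> (\<beta> + real k * h)) = 0"
proof -
  define n where "n = Suc (card (params Ns :: 'd param set))"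
  obtain xs :: "nat \<Rightarrow> real ^ 'd" where shifts: "\<And>\<beta> h. \<exists>\<theta>. is_network Ns \<theta>
      \<and> (\<forall>k<n. realization \<rho> \<Omega> Ns \<theta> (xs k) 0 = \<rho> (\<beta> + real k * h))"
    by (rule network_samples_shifts[OF L pos \<open>interior \<Omega> \<noteq> {}\<close> cont \<open>\<rho> p \<noteq> \<rho> q\<close>, where n = n])
      (rule that)
  obtain y where y: "\<And>\<theta>. is_network Ns \<theta> \<Longrightarrow>
      \<exists>k\<le>card (params Ns :: 'd param set). realization \<rho> \<Omega> Ns \<theta> (xs k) 0 \<noteq> y k"
    by (rule network_samples_not_onto[OF lip L, where \<Omega> = \<Omega> and xs = xs]) (rule that)
  have "\<not> (\<forall>y. \<exists>f\<in>RNN \<rho> \<Omega> Ns. \<forall>k<n. f (xs k) 0 = y k)"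
  proof
    assume "\<forall>y. \<exists>f\<in>RNN \<rho> \<Omega> Ns. \<forall>k<n. f (xs k) 0 = y k"
    then obtain \<theta> where "is_network Ns \<theta>" and "\<forall>k<n. realization \<rho> \<Omega> Ns \<theta> (xs k) 0 = y k"
      unfolding RNN_def by blast
    with y[OF \<open>is_network Ns \<theta>\<close>] show False
      by (auto simp: n_def less_Suc_eq_le)
  qed
  then have "\<exists>c. (\<exists>k<n. c k \<noteq> 0) \<and> (\<forall>f\<in>RNN \<rho> \<Omega> Ns. (\<Sum>k<n. c k * f (xs k) 0) = 0)"
    using RNN_samples_onto_or_annihilated[OF L convex, of n xs] by blast
  then obtain c k\<^sub>0 where "k\<^sub>0 < n" "c k\<^sub>0 \<noteq> 0"
    and rel: "\<And>f. f \<in> RNN \<rho> \<Omega> Ns \<Longrightarrow> (\<Sum>k<n. c k * f (xs k) 0) = 0"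
    by blast
  have "(\<Sum>k<n. c k * \<rho> (\<beta> + real k * h)) = 0" for \<beta> h
  proof -
    obtain \<theta> where "is_network Ns \<theta>"
      and \<theta>: "\<And>k. k < n \<Longrightarrow> realization \<rho> \<Omega> Ns \<theta> (xs k) 0 = \<rho> (\<beta> + real k * h)"
      using shifts by blast
    then have "realization \<rho> \<Omega> Ns \<theta> \<in> RNN \<rho> \<Omega> Ns"
      unfolding RNN_def by blast
    then have "(\<Sum>k<n. c k * realization \<rho> \<Omega> Ns \<theta> (xs k) 0) = 0"
      by (rule rel)
    then show ?thesis
      by (simp add: \<theta>)
  qed
  then show ?thesis
    by (rule that[of k\<^sub>0 n c, OF \<open>k\<^sub>0 < n\<close> \<open>c k\<^sub>0 \<noteq> 0\<close>])
qed

theorem theorem2p1: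
  fixes \<rho> :: "real \<Rightarrow> real" and \<Omega> :: "(real ^ 'd::finite) set" and Ns :: "nat list"
  assumes "length Ns \<ge> 2"
    and "\<forall>N\<in>set Ns. N \<ge> 1"
    and "interior \<Omega> \<noteq> {}"
    and "locally_lipschitz \<rho>"
    and "fun_set_convex (RNN \<rho> \<Omega> Ns)"
  shows "is_polynomial_fun \<rho>"
proof (cases "\<exists>p q. \<rho> p \<noteq> \<rho> q")
  case False
  then have "\<rho> x = poly [:\<rho> 0:] x" for x
    by auto
  then show ?thesis
    unfolding is_polynomial_fun_def by blast
next
  case True
  then obtain p q where "\<rho> p \<noteq> \<rho> q"
    by blast
  have cont: "continuous_on UNIV \<rho>"
    using assms(4) by (rule locally_lipschitz_imp_continuous)
  have lip: "\<exists>K. K-lipschitz_on {-X..X} \<rho>" for X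
    using locally_lipschitz_on_interval[OF assms(4)] by blast
  show ?thesis
    by (rule convex_RNN_shift_relation[OF assms(1-3) cont lip assms(5) \<open>\<rho> p \<noteq> \<rho> q\<close>])
      (rule continuous_shift_relation_imp_polynomial[OF cont])
qed

end
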